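(* Let $N\ge3$. (a) $\mathcal F:(\mathbb{Q}(\mu_N)\langle\langle\widetilde X\rangle\rangle,\widehat\Delta_{\tilde{sh}})\to(\mathbb{Q}(\mu_N)\langle\langle X\rangle\rangle,\widehat\Delta_{sh})$ is a Hopf algebra isomorphism, i.e. an algebra isomorphism satisfying $\widehat\Delta_{sh}\circ\mathcal F=\mathcal F^{\otimes2}\circ\widehat\Delta_{\tilde{sh}}$. (b) $\mathcal F_Y:(\mathbb{Q}(\mu_N)\langle\langle\widetilde Y\rangle\rangle,\widehat\Delta_{\tilde*})\to(\mathbb{Q}(\mu_N)\langle\langle Y\rangle\rangle,\widehat\Delta_* )$ is a Hopf algebra isomorphism, i.e. an algebra isomorphism satisfying $\widehat\Delta_*\circ\mathcal F_Y=\mathcal F_Y^{\otimes2}\circ\widehat\Delta_{\tilde*}$.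
   Context: $\zeta_N=\exp(2\pi i/N)$, $\mu_N$ the complex $N$-th roots of unity, $\iota:\{1,\dots,N\}\to\mathbb{Z}/N\mathbb{Z}$ the residue-class bijection. $K\langle\langle\mathcal L\rangle\rangle$: noncommutative formal power series over $\mathcal L$; tensor products are completed. Alphabets $X=\{x_0\}\cup\{x_\zeta:\zeta\in\mu_N\}$, $Y=\{y_{k,\zeta}:k\ge1,\zeta\in\mu_N\}$, $\widetilde X=\{\tilde x\}\cup\{\tilde x_\alpha:\alpha\in\mathbb{Z}/N\mathbb{Z}\}$, $\widetilde Y=\{\tilde y_{k,\alpha}:k\ge1,\alpha\in\mathbb{Z}/N\mathbb{Z}\}$, with $y_{k,\zeta}\equiv x_0^{k-1}x_\zeta$ and $\tilde y_{k,\alpha}\equiv\tilde x^{k-1}\tilde x_\alpha$. Coproducts (continuous algebra morphisms): $\widehat\Delta_{sh}$ (resp. $\widehat\Delta_{\tilde{sh}}$) sends each letter $u$ of $X$ (resp. $\widetilde X$) to $u\otimes1+1\otimes u$; $\widehat\Delta_*(y_{k,\zeta})=y_{k,\zeta}\otimes1+1\otimes y_{k,\zeta}+\sum_{k_1+k_2=k,\,k_i\ge1,\,\zeta_1\zeta_2=\zeta}y_{k_1,\zeta_1}\otimes y_{k_2,\zeta_2}$; $\widehat\Delta_{\tilde*}(\tilde y_{k,\alpha})=\tilde y_{k,\alpha}\otimes1+1\otimes\tilde y_{k,\alpha}+\sum_{k_1+k_2=k,\,k_i\ge1}\tilde y_{k_1,\alpha}\otimes\tilde y_{k_2,\alpha}$.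 $\mathcal F$ is the continuous $\mathbb{Q}(\mu_N)$-algebra isomorphism $\tilde x\mapsto x_0$, $\tilde x_\alpha\mapsto\sum_{m=1}^N\zeta_N^{-m\iota^{-1}(\alpha)}x_{\zeta_N^m}$, and $\mathcal F_Y$ is the algebra isomorphism $\tilde y_{k,\alpha}\mapsto\sum_{m=1}^N\zeta_N^{-m\iota^{-1}(\alpha)}y_{k,\zeta_N^m}$. *)

theory Defs
  imports Complex_Main
begin

definition zeta :: "nat \<Rightarrow> complex" where
  "zeta N = exp (2 * pi * \<i> / of_nat N)"

definition mu :: "nat \<Rightarrow> complex set" where
  "mu N = {z. z ^ N = 1}"

definition is_subfield :: "complex set \<Rightarrow> bool" where
  "is_subfield F \<longleftrightarrow> 0 \<in> F \<and> 1 \<in> F \<and>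
     (\<forall>x\<in>F. \<forall>y\<in>F. x + y \<in> F \<and> x * y \<in> F) \<and>
     (\<forall>x\<in>F. - x \<in> F) \<and> (\<forall>x\<in>F. x \<noteq> 0 \<longrightarrow> inverse x \<in> F)"

definition QmuN :: "nat \<Rightarrow> complex set" where
  "QmuN N = \<Inter> {F. is_subfield F \<and> mu N \<subseteq> F}"

text \<open>iota^{-1}: residue classes mod N represented by 0..N-1 are sent to their
  representative in {1..N}.\<close>
definition iota_inv :: "nat \<Rightarrow> nat \<Rightarrow> nat" where
  "iota_inv N a = (if a = 0 then N else a)"

type_synonym 'a ser = "'a list \<Rightarrow> complex"
type_synonym 'a tser = "'a list \<times> 'a list \<Rightarrow> complex"

definition ser :: "complex set \<Rightarrow> 'a set \<Rightarrow> 'a ser set" where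
  "ser K A = {S. \<forall>w. S w \<in> K \<and> (S w \<noteq> 0 \<longrightarrow> w \<in> lists A)}"

definition sadd :: "'a ser \<Rightarrow> 'a ser \<Rightarrow> 'a ser" where
  "sadd S T = (\<lambda>w. S w + T w)"

definition scal :: "complex \<Rightarrow> 'a ser \<Rightarrow> 'a ser" where
  "scal c S = (\<lambda>w. c * S w)"

definition smul :: "'a ser \<Rightarrow> 'a ser \<Rightarrow> 'a ser" where
  "smul S T = (\<lambda>w. \<Sum>i\<le>length w. S (take i w) * T (drop i w))"

definition sone :: "'a ser" where
  "sone = (\<lambda>w. if w = [] then 1 else 0)"

definition sletter :: "'a \<Rightarrow> 'a ser" where
  "sletter x = (\<lambda>w. if w = [x] then 1 else 0)"

definition tmul :: "'a tser \<Rightarrow> 'a tser \<Rightarrow> 'a tser" where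
  "tmul T U = (\<lambda>(u, v). \<Sum>i\<le>length u. \<Sum>j\<le>length v.
      T (take i u, take j v) * U (drop i u, drop j v))"

definition tone :: "'a tser" where
  "tone = (\<lambda>(u, v). if u = [] \<and> v = [] then 1 else 0)"

definition etens :: "'a list \<Rightarrow> 'a list \<Rightarrow> 'a tser" where
  "etens p q = (\<lambda>(u, v). if u = p \<and> v = q then 1 else 0)"

definition prim :: "'a \<Rightarrow> 'a tser" where
  "prim x = (\<lambda>t. etens [x] [] t + etens [] [x] t)"

definition wimg :: "('a \<Rightarrow> 'b ser) \<Rightarrow> 'a list \<Rightarrow> 'b ser" where
  "wimg phi w = foldr (\<lambda>a acc. smul (phi a) acc) w sone"

text \<open>Continuous extension to series over the alphabet A (the sums are finite
  in all cases used below).\<close>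
definition ext :: "'a set \<Rightarrow> ('a \<Rightarrow> 'b ser) \<Rightarrow> 'a ser \<Rightarrow> 'b ser" where
  "ext A phi S = (\<lambda>w. \<Sum>v\<in>{v. v \<in> lists A \<and> wimg phi v w \<noteq> 0}. S v * wimg phi v w)"

definition twimg :: "('a \<Rightarrow> 'a tser) \<Rightarrow> 'a list \<Rightarrow> 'a tser" where
  "twimg psi w = foldr (\<lambda>a acc. tmul (psi a) acc) w tone"

definition tens_ext :: "'a set \<Rightarrow> ('a \<Rightarrow> 'a tser) \<Rightarrow> 'a ser \<Rightarrow> 'a tser" where
  "tens_ext A psi S = (\<lambda>p. \<Sum>v\<in>{v. v \<in> lists A \<and> twimg psi v p \<noteq> 0}. S v * twimg psi v p)"

definition tmap :: "'a set \<Rightarrow> ('a \<Rightarrow> 'b ser) \<Rightarrow> 'a tser \<Rightarrow> 'b tser" where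
  "tmap A phi T = (\<lambda>(u, v). \<Sum>p\<in>{(u', v'). u' \<in> lists A \<and> v' \<in> lists A \<and>
        wimg phi u' u \<noteq> 0 \<and> wimg phi v' v \<noteq> 0}.
        T p * wimg phi (fst p) u * wimg phi (snd p) v)"

definition alg_iso :: "complex set \<Rightarrow> 'a set \<Rightarrow> 'b set \<Rightarrow> ('a ser \<Rightarrow> 'b ser) \<Rightarrow> bool" where
  "alg_iso K A B f \<longleftrightarrow> bij_betw f (ser K A) (ser K B) \<and>
     (\<forall>S\<in>ser K A. \<forall>T\<in>ser K A. f (sadd S T) = sadd (f S) (f T) \<and> f (smul S T) = smul (f S) (f T)) \<and>
     (\<forall>c\<in>K. \<forall>S\<in>ser K A. f (scal c S) = scal c (f S)) \<and>
     f sone = sone"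

datatype xl = X0 | XZ complex
datatype xtl = XT | XTA nat
datatype yl = YL nat complex
datatype ytl = YTL nat nat

definition alphX :: "nat \<Rightarrow> xl set" where
  "alphX N = insert X0 (XZ ` mu N)"
definition alphXt :: "nat \<Rightarrow> xtl set" where
  "alphXt N = insert XT (XTA ` {..<N})"
definition alphY :: "nat \<Rightarrow> yl set" where
  "alphY N = {YL k z | k z. 1 \<le> k \<and> z \<in> mu N}"
definition alphYt :: "nat \<Rightarrow> ytl set" where
  "alphYt N = {YTL k a | k a. 1 \<le> k \<and> a < N}"

definition Dsh :: "nat \<Rightarrow> xl ser \<Rightarrow> xl tser" where
  "Dsh N = tens_ext (alphX N) prim"
definition Dsht :: "nat \<Rightarrow> xtl ser \<Rightarrow> xtl tser" where
  "Dsht N = tens_ext (alphXt N) prim"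

definition Dst_letter :: "nat \<Rightarrow> yl \<Rightarrow> yl tser" where
  "Dst_letter N y = (case y of YL k z \<Rightarrow>
     (\<lambda>t. prim (YL k z) t +
        (\<Sum>q\<in>{(k1, z1, k2, z2). 1 \<le> k1 \<and> 1 \<le> k2 \<and> k1 + k2 = k \<and>
              z1 \<in> mu N \<and> z2 \<in> mu N \<and> z1 * z2 = z}.
           etens [YL (fst q) (fst (snd q))] [YL (fst (snd (snd q))) (snd (snd (snd q)))] t)))"
definition Dst :: "nat \<Rightarrow> yl ser \<Rightarrow> yl tser" where
  "Dst N = tens_ext (alphY N) (Dst_letter N)"

definition Dstt_letter :: "ytl \<Rightarrow> ytl tser" where
  "Dstt_letter y = (case y of YTL k a \<Rightarrow>
     (\<lambda>t. prim (YTL k a) t +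
        (\<Sum>k1\<in>{1..<k}. etens [YTL k1 a] [YTL (k - k1) a] t)))"
definition Dstt :: "nat \<Rightarrow> ytl ser \<Rightarrow> ytl tser" where
  "Dstt N = tens_ext (alphYt N) Dstt_letter"

definition F_letter :: "nat \<Rightarrow> xtl \<Rightarrow> xl ser" where
  "F_letter N x = (case x of XT \<Rightarrow> sletter X0
     | XTA a \<Rightarrow> (\<lambda>w. \<Sum>m=1..N. zeta N powi (- int (m * iota_inv N a)) * sletter (XZ (zeta N ^ m)) w))"
definition FX :: "nat \<Rightarrow> xtl ser \<Rightarrow> xl ser" where
  "FX N = ext (alphXt N) (F_letter N)"

definition FY_letter :: "nat \<Rightarrow> ytl \<Rightarrow> yl ser" where
  "FY_letter N y = (case y of YTL k a \<Rightarrow>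
     (\<lambda>w. \<Sum>m=1..N. zeta N powi (- int (m * iota_inv N a)) * sletter (YL k (zeta N ^ m)) w))"
definition FY :: "nat \<Rightarrow> ytl ser \<Rightarrow> yl ser" where
  "FY N = ext (alphYt N) (FY_letter N)"

end

theory Submission
  imports Defs
begin

(*
  Both maps are continuous algebra morphisms sending each letter to a linear combination of
  letters. Apart from x\<^sub>0 (resp. for each fixed weight k) the coefficient matrix is the discrete
  Fourier matrix (z\<^sup>-\<^sup>i), where i = \<iota>\<^sup>-\<^sup>1(\<alpha>) and z \<in> \<mu>\<^sub>N; by the orthogonality of the
  characters of \<mu>\<^sub>N its inverse is (z\<^sup>i / N). Substituting letters according to the inverse
  matrix therefore gives the inverse morphism, and all coefficients lie in \<rat>(\<mu>\<^sub>N).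

  Both sides of each coproduct identity are continuous algebra morphisms into the completed tensor
  square, so it suffices to compare them on letters. For the shuffle coproducts the letters are
  primitive, and substituting linear combinations of letters for letters preserves primitivity.
  For the stuffle coproducts the quasi-shuffle term of the image of y~\<^sub>k\<^sub>,\<^sub>\<alpha> is
  \<Sum> (\<zeta>\<^sub>1\<zeta>\<^sub>2)\<^sup>-\<^sup>i y\<^sub>k\<^sub>1\<^sub>,\<^sub>\<zeta>\<^sub>1 \<otimes> y\<^sub>k\<^sub>2\<^sub>,\<^sub>\<zeta>\<^sub>2, which is the image of its quasi-shuffle term
  \<Sum> y~\<^sub>k\<^sub>1\<^sub>,\<^sub>\<alpha> \<otimes> y~\<^sub>k\<^sub>2\<^sub>,\<^sub>\<alpha> because z \<mapsto> z\<^sup>-\<^sup>i is multiplicative. Gradings by length,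
  resp. by weight, keep all the sums finite.
*)

section \<open>Substitutions of letters by linear combinations of letters\<close>

(* The coefficient of the word x in the image of the word v under the algebra morphism
  sending each letter a to \<Sum>\<^sub>b M a b \<cdot> b. *)
fun subst_coeff :: "('a \<Rightarrow> 'b \<Rightarrow> complex) \<Rightarrow> 'a list \<Rightarrow> 'b list \<Rightarrow> complex" where
  "subst_coeff M [] [] = 1"
| "subst_coeff M (a # v) (b # x) = M a b * subst_coeff M v x"
| "subst_coeff M [] (b # x) = 0"
| "subst_coeff M (a # v) [] = 0"

lemma subst_coeff_length: "subst_coeff M v x \<noteq> 0 \<Longrightarrow> length v = length x"
  by (induction M v x rule: subst_coeff.induct) auto

lemma subst_coeff_append:
  "length v1 = length x1 \<Longrightarrow>
   subst_coeff M (v1 @ v2) (x1 @ x2) = subst_coeff M v1 x1 * subst_coeff M v2 x2"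
proof (induction v1 arbitrary: x1)
  case (Cons a v)
  then obtain b x' where "x1 = b # x'" by (cases x1) auto
  with Cons show ?case by auto
qed simp

lemma subst_coeff_take_drop:
  "length v = length x \<Longrightarrow>
   subst_coeff M v x = subst_coeff M (take i v) (take i x) * subst_coeff M (drop i v) (drop i x)"
  by (metis append_take_drop_id length_take subst_coeff_append)

lemma subst_coeff_Nil: "subst_coeff M [] x = (if x = [] then 1 else 0)"
  by (cases x) auto

lemma subst_coeff_singleton: "subst_coeff M [a] x = (if length x = 1 then M a (hd x) else 0)"
  by (cases x rule: remdups_adj.cases) auto

definition pre_words :: "'a set \<Rightarrow> ('a \<Rightarrow> 'b \<Rightarrow> complex) \<Rightarrow> 'b list \<Rightarrow> 'a list set" where
  "pre_words A M x = {v. v \<in> lists A \<and> subst_coeff M v x \<noteq> 0}"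

definition img_words :: "'b set \<Rightarrow> ('a \<Rightarrow> 'b \<Rightarrow> complex) \<Rightarrow> 'a list \<Rightarrow> 'b list set" where
  "img_words B M v = {x. x \<in> lists B \<and> subst_coeff M v x \<noteq> 0}"

definition subst_ser :: "'a set \<Rightarrow> ('a \<Rightarrow> 'b \<Rightarrow> complex) \<Rightarrow> 'a ser \<Rightarrow> 'b ser" where
  "subst_ser A M S = (\<lambda>x. \<Sum>v\<in>pre_words A M x. S v * subst_coeff M v x)"

definition subst_tser :: "'a set \<Rightarrow> ('a \<Rightarrow> 'b \<Rightarrow> complex) \<Rightarrow> 'a tser \<Rightarrow> 'b tser" where
  "subst_tser A M T = (\<lambda>(u, w). \<Sum>(u', w')\<in>pre_words A M u \<times> pre_words A M w.
      T (u', w') * subst_coeff M u' u * subst_coeff M w' w)"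

lemma sum_swap_on_support:
  assumes "finite X" "\<And>x. x \<in> X \<Longrightarrow> finite (Y x)" "finite V" "\<And>v. v \<in> V \<Longrightarrow> finite (Z v)"
    and "\<And>x v. f x v \<noteq> 0 \<Longrightarrow> x \<in> X \<and> v \<in> Y x \<longleftrightarrow> v \<in> V \<and> x \<in> Z v"
  shows "(\<Sum>x\<in>X. \<Sum>v\<in>Y x. f x v) = (\<Sum>v\<in>V. \<Sum>x\<in>Z v. f x v)"
proof -
  let ?R = "{(x, v). f x v \<noteq> 0 \<and> x \<in> X \<and> v \<in> Y x}"
  have "(\<Sum>x\<in>X. \<Sum>v\<in>Y x. f x v) = (\<Sum>(x, v)\<in>Sigma X Y. f x v)"
    using assms by (subst sum.Sigma) auto
  also have "\<dots> = (\<Sum>(x, v)\<in>?R. f x v)"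
    using assms by (intro sum.mono_neutral_right) auto
  also have "\<dots> = (\<Sum>(v, x)\<in>prod.swap ` ?R. f x v)"
    by (simp add: sum.reindex case_prod_unfold)
  also have "prod.swap ` ?R = {(v, x). f x v \<noteq> 0 \<and> v \<in> V \<and> x \<in> Z v}"
    using assms(5) by (fastforce simp: image_iff)
  also have "(\<Sum>(v, x)\<in>\<dots>. f x v) = (\<Sum>(v, x)\<in>Sigma V Z. f x v)"
    using assms by (intro sum.mono_neutral_left) auto
  also have "\<dots> = (\<Sum>v\<in>V. \<Sum>x\<in>Z v. f x v)"
    using assms by (subst sum.Sigma) auto
  finally show ?thesis .
qed

lemma sum_cons_image:
  "(\<Sum>x\<in>(\<lambda>(b, x). b # x) ` (Bs \<times> Xs). f x) = (\<Sum>b\<in>Bs. \<Sum>x\<in>Xs. f (b # x))"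
proof -
  have "inj_on (\<lambda>(b, x). b # x) (Bs \<times> Xs)" by (auto simp: inj_on_def)
  then show ?thesis by (simp add: sum.reindex sum.cartesian_product split_def)
qed

lemma sum_swap_pairs:
  "(\<Sum>x\<in>X. \<Sum>y\<in>Y. \<Sum>i\<in>I. \<Sum>j\<in>J. h x y i j) = (\<Sum>i\<in>I. \<Sum>j\<in>J. \<Sum>x\<in>X. \<Sum>y\<in>Y. h x y i j)"
proof -
  have "(\<Sum>x\<in>X. \<Sum>y\<in>Y. \<Sum>i\<in>I. \<Sum>j\<in>J. h x y i j) = (\<Sum>x\<in>X. \<Sum>i\<in>I. \<Sum>y\<in>Y. \<Sum>j\<in>J. h x y i j)"
    by (rule sum.cong[OF refl], rule sum.swap)
  also have "\<dots> = (\<Sum>i\<in>I. \<Sum>x\<in>X. \<Sum>j\<in>J. \<Sum>y\<in>Y. h x y i j)"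
    by (subst sum.swap) (rule sum.cong[OF refl], rule sum.cong[OF refl], rule sum.swap)
  also have "\<dots> = (\<Sum>i\<in>I. \<Sum>j\<in>J. \<Sum>x\<in>X. \<Sum>y\<in>Y. h x y i j)"
    by (rule sum.cong[OF refl], rule sum.swap)
  finally show ?thesis .
qed

locale letter_subst =
  fixes A :: "'a set" and B :: "'b set" and M :: "'a \<Rightarrow> 'b \<Rightarrow> complex"
  assumes subst_letter_in: "a \<in> A \<Longrightarrow> M a b \<noteq> 0 \<Longrightarrow> b \<in> B"
    and finite_pre_letters: "finite {a. a \<in> A \<and> M a b \<noteq> 0}"
    and finite_img_letters: "a \<in> A \<Longrightarrow> finite {b. M a b \<noteq> 0}"
begin

abbreviation "pre \<equiv> pre_words A M"
abbreviation "img \<equiv> img_words B M"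
abbreviation "\<Phi> \<equiv> subst_ser A M"
abbreviation "\<Phi>\<^sub>2 \<equiv> subst_tser A M"

lemma finite_img_letters_in: "a \<in> A \<Longrightarrow> finite {b. b \<in> B \<and> M a b \<noteq> 0}"
  using finite_img_letters by (rule rev_finite_subset) auto

lemma sum_img_letters_superset:
  assumes "a \<in> A" "finite C" "{b. b \<in> B \<and> M a b \<noteq> 0} \<subseteq> C"
  shows "(\<Sum>b\<in>{b. b \<in> B \<and> M a b \<noteq> 0}. M a b * f b) = (\<Sum>b\<in>C. M a b * f b)"
  by (rule sum.mono_neutral_left) (use assms subst_letter_in in auto)

lemma pre_Nil: "pre [] = {[]}"
  by (auto simp: pre_words_def dest: subst_coeff_length)

lemma pre_Cons: "pre (b # x) = (\<lambda>(a, v). a # v) ` ({a. a \<in> A \<and> M a b \<noteq> 0} \<times> pre x)"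
proof -
  have "v \<in> pre (b # x) \<longleftrightarrow> (\<exists>a v'. v = a # v' \<and> a \<in> A \<and> M a b \<noteq> 0 \<and> v' \<in> pre x)" for v
    by (cases v) (auto simp: pre_words_def)
  then show ?thesis by auto
qed

lemma finite_pre: "finite (pre x)"
  by (induction x) (simp_all add: pre_Nil pre_Cons finite_pre_letters)

lemma img_Nil: "img [] = {[]}"
  by (auto simp: img_words_def subst_coeff_Nil)

lemma img_Cons: "img (a # v) = (\<lambda>(b, x). b # x) ` ({b. b \<in> B \<and> M a b \<noteq> 0} \<times> img v)"
proof -
  have "x \<in> img (a # v) \<longleftrightarrow> (\<exists>b x'. x = b # x' \<and> b \<in> B \<and> M a b \<noteq> 0 \<and> x' \<in> img v)" for x
    by (cases x) (auto simp: img_words_def)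
  then show ?thesis by auto
qed

lemma finite_img: "v \<in> lists A \<Longrightarrow> finite (img v)"
  by (induction v) (simp_all add: img_Nil img_Cons finite_img_letters_in)

lemma subst_coeff_in_lists: "v \<in> lists A \<Longrightarrow> subst_coeff M v x \<noteq> 0 \<Longrightarrow> x \<in> lists B"
proof (induction v arbitrary: x)
  case (Cons a v)
  obtain b x' where "x = b # x'" using Cons.prems(2) by (cases x) auto
  then show ?case using Cons subst_letter_in by auto
qed (auto dest: subst_coeff_length)

lemma subst_ser_support: "\<Phi> S x \<noteq> 0 \<Longrightarrow> x \<in> lists B"
proof -
  assume "\<Phi> S x \<noteq> 0"
  then obtain v where "v \<in> pre x" "S v * subst_coeff M v x \<noteq> 0"
    unfolding subst_ser_def by (meson sum.not_neutral_contains_not_neutral)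
  then have "v \<in> lists A" "subst_coeff M v x \<noteq> 0" by (auto simp: pre_words_def)
  then show ?thesis by (rule subst_coeff_in_lists)
qed

(* v \<mapsto> (take i v, drop i v) is a bijection from pre x onto pre (take i x) \<times> pre (drop i x). *)
lemma sum_pre_take_drop:
  assumes "i \<le> length x"
  shows "(\<Sum>v\<in>pre x. f (take i v) (drop i v)) =
         (\<Sum>v1\<in>pre (take i x). \<Sum>v2\<in>pre (drop i x). f v1 v2)"
proof -
  have "(\<Sum>v1\<in>pre (take i x). \<Sum>v2\<in>pre (drop i x). f v1 v2) =
        (\<Sum>(v1, v2)\<in>pre (take i x) \<times> pre (drop i x). f v1 v2)"
    by (rule sum.cartesian_product)
  also have "\<dots> = (\<Sum>v\<in>pre x. f (take i v) (drop i v))"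
  proof (rule sum.reindex_bij_witness[where i = "\<lambda>v. (take i v, drop i v)" and j = "\<lambda>(v1, v2). v1 @ v2"])
    fix v assume v: "v \<in> pre x"
    then have "length v = length x" "subst_coeff M v x \<noteq> 0"
      by (auto simp: pre_words_def dest: subst_coeff_length)
    with v show "(take i v, drop i v) \<in> pre (take i x) \<times> pre (drop i x)"
      by (auto simp: pre_words_def subst_coeff_take_drop[of v x M i] dest: in_set_takeD in_set_dropD)
  next
    fix p assume p: "p \<in> pre (take i x) \<times> pre (drop i x)"
    obtain v1 v2 where p12: "p = (v1, v2)" by fastforce
    have v12: "v1 \<in> lists A" "v2 \<in> lists A"
      and nz: "subst_coeff M v1 (take i x) \<noteq> 0" "subst_coeff M v2 (drop i x) \<noteq> 0"
      using p p12 by (auto simp: pre_words_def)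
    have l1: "length v1 = i" using subst_coeff_length[OF nz(1)] assms by simp
    then have "subst_coeff M (v1 @ v2) x = subst_coeff M v1 (take i x) * subst_coeff M v2 (drop i x)"
      using subst_coeff_append[of v1 "take i x" M v2 "drop i x"] assms by simp
    then show "(case p of (v1, v2) \<Rightarrow> v1 @ v2) \<in> pre x"
      using p12 v12 nz by (simp add: pre_words_def)
    show "(take i (case p of (v1, v2) \<Rightarrow> v1 @ v2), drop i (case p of (v1, v2) \<Rightarrow> v1 @ v2)) = p"
      and "f (take i (case p of (v1, v2) \<Rightarrow> v1 @ v2)) (drop i (case p of (v1, v2) \<Rightarrow> v1 @ v2)) =
           (case p of (v1, v2) \<Rightarrow> f v1 v2)"
      using p12 l1 by simp_all
  qed simp
  finally show ?thesis by simp
qed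

lemma subst_ser_smul: "\<Phi> (smul S T) = smul (\<Phi> S) (\<Phi> T)"
proof
  fix x
  let ?c = "subst_coeff M"
  have "\<Phi> (smul S T) x = (\<Sum>v\<in>pre x. \<Sum>i\<le>length x.
      (S (take i v) * ?c (take i v) (take i x)) * (T (drop i v) * ?c (drop i v) (drop i x)))"
    unfolding subst_ser_def
  proof (rule sum.cong[OF refl])
    fix v assume "v \<in> pre x"
    then have l: "length v = length x" by (auto simp: pre_words_def dest: subst_coeff_length)
    show "smul S T v * ?c v x = (\<Sum>i\<le>length x.
      (S (take i v) * ?c (take i v) (take i x)) * (T (drop i v) * ?c (drop i v) (drop i x)))"
      unfolding smul_def l sum_distrib_right
    proof (rule sum.cong[OF refl])
      fix i
      show "S (take i v) * T (drop i v) * ?c v x =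
            S (take i v) * ?c (take i v) (take i x) * (T (drop i v) * ?c (drop i v) (drop i x))"
        using subst_coeff_take_drop[OF l, of M i] by (simp add: algebra_simps)
    qed
  qed
  also have "\<dots> = (\<Sum>i\<le>length x. \<Sum>v1\<in>pre (take i x). \<Sum>v2\<in>pre (drop i x).
      (S v1 * ?c v1 (take i x)) * (T v2 * ?c v2 (drop i x)))"
    by (subst sum.swap) (rule sum.cong[OF refl], rule sum_pre_take_drop, simp)
  also have "\<dots> = smul (\<Phi> S) (\<Phi> T) x"
    by (simp add: smul_def subst_ser_def sum_product)
  finally show "\<Phi> (smul S T) x = smul (\<Phi> S) (\<Phi> T) x" .
qed

lemma subst_ser_sadd: "\<Phi> (sadd S T) = sadd (\<Phi> S) (\<Phi> T)"
  by (auto simp: subst_ser_def sadd_def sum.distrib algebra_simps)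

lemma subst_ser_scal: "\<Phi> (scal c S) = scal c (\<Phi> S)"
  by (auto simp: subst_ser_def scal_def sum_distrib_left algebra_simps)

lemma subst_ser_sone: "\<Phi> sone = sone"
proof
  fix x
  have "\<Phi> sone x = (\<Sum>v\<in>pre x. if v = [] then subst_coeff M [] x else 0)"
    unfolding subst_ser_def sone_def by (rule sum.cong) auto
  also have "\<dots> = (if [] \<in> pre x then subst_coeff M [] x else 0)"
    by (simp add: sum.delta[OF finite_pre])
  also have "\<dots> = sone x"
    by (auto simp: sone_def pre_words_def subst_coeff_Nil)
  finally show "\<Phi> sone x = sone x" .
qed

lemma subst_tser_eq:
  "\<Phi>\<^sub>2 T (u, w) = (\<Sum>u'\<in>pre u. \<Sum>w'\<in>pre w. T (u', w') * subst_coeff M u' u * subst_coeff M w' w)"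
  by (simp add: subst_tser_def sum.cartesian_product)

lemma sum_pre_pair_take_drop:
  assumes "i \<le> length u" "j \<le> length w"
  shows "(\<Sum>u'\<in>pre u. \<Sum>w'\<in>pre w. f (take i u') (drop i u') (take j w') (drop j w')) =
         (\<Sum>u1\<in>pre (take i u). \<Sum>u2\<in>pre (drop i u). \<Sum>w1\<in>pre (take j w). \<Sum>w2\<in>pre (drop j w).
            f u1 u2 w1 w2)"
proof -
  have "(\<Sum>u'\<in>pre u. \<Sum>w'\<in>pre w. f (take i u') (drop i u') (take j w') (drop j w')) =
        (\<Sum>u'\<in>pre u. \<Sum>w1\<in>pre (take j w). \<Sum>w2\<in>pre (drop j w). f (take i u') (drop i u') w1 w2)"
    by (rule sum.cong[OF refl], rule sum_pre_take_drop) (use assms in simp)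
  also have "\<dots> = (\<Sum>u1\<in>pre (take i u). \<Sum>u2\<in>pre (drop i u).
      \<Sum>w1\<in>pre (take j w). \<Sum>w2\<in>pre (drop j w). f u1 u2 w1 w2)"
    by (rule sum_pre_take_drop[where f = "\<lambda>u1 u2. \<Sum>w1\<in>pre (take j w). \<Sum>w2\<in>pre (drop j w). f u1 u2 w1 w2"])
      (use assms in simp)
  finally show ?thesis .
qed

lemma subst_tser_tmul: "\<Phi>\<^sub>2 (tmul T U) = tmul (\<Phi>\<^sub>2 T) (\<Phi>\<^sub>2 U)"
proof (rule ext, clarify)
  fix u w
  let ?c = "subst_coeff M"
  define g where "g i j u1 u2 w1 w2 =
     (T (u1, w1) * ?c u1 (take i u) * ?c w1 (take j w)) *
     (U (u2, w2) * ?c u2 (drop i u) * ?c w2 (drop j w))" for i j u1 u2 w1 w2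
  have "\<Phi>\<^sub>2 (tmul T U) (u, w) = (\<Sum>u'\<in>pre u. \<Sum>w'\<in>pre w. \<Sum>i\<le>length u. \<Sum>j\<le>length w.
           g i j (take i u') (drop i u') (take j w') (drop j w'))"
    unfolding subst_tser_eq
  proof (intro sum.cong refl)
    fix u' w' assume "u' \<in> pre u" "w' \<in> pre w"
    then have lu: "length u' = length u" and lw: "length w' = length w"
      by (auto simp: pre_words_def dest: subst_coeff_length)
    show "tmul T U (u', w') * ?c u' u * ?c w' w = (\<Sum>i\<le>length u. \<Sum>j\<le>length w.
           g i j (take i u') (drop i u') (take j w') (drop j w'))"
      unfolding tmul_def lu lw split sum_distrib_right
    proof (intro sum.cong refl)
      fix i j
      show "T (take i u', take j w') * U (drop i u', drop j w') * ?c u' u * ?c w' w =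
            g i j (take i u') (drop i u') (take j w') (drop j w')"
        unfolding g_def using subst_coeff_take_drop[OF lu, of M i] subst_coeff_take_drop[OF lw, of M j]
        by (simp add: algebra_simps)
    qed
  qed
  also have "\<dots> = (\<Sum>i\<le>length u. \<Sum>j\<le>length w. \<Sum>u'\<in>pre u. \<Sum>w'\<in>pre w.
           g i j (take i u') (drop i u') (take j w') (drop j w'))"
    by (rule sum_swap_pairs)
  also have "\<dots> = (\<Sum>i\<le>length u. \<Sum>j\<le>length w.
      \<Sum>u1\<in>pre (take i u). \<Sum>u2\<in>pre (drop i u). \<Sum>w1\<in>pre (take j w). \<Sum>w2\<in>pre (drop j w).
        g i j u1 u2 w1 w2)"
    by (intro sum.cong refl sum_pre_pair_take_drop) auto
  also have "\<dots> = (\<Sum>i\<le>length u. \<Sum>j\<le>length w. \<Phi>\<^sub>2 T (take i u, take j w) * \<Phi>\<^sub>2 U (drop i u, drop j w))"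
    by (simp add: subst_tser_eq sum_product g_def)
  also have "\<dots> = tmul (\<Phi>\<^sub>2 T) (\<Phi>\<^sub>2 U) (u, w)"
    by (simp add: tmul_def)
  finally show "\<Phi>\<^sub>2 (tmul T U) (u, w) = tmul (\<Phi>\<^sub>2 T) (\<Phi>\<^sub>2 U) (u, w)" .
qed

lemma subst_tser_add: "\<Phi>\<^sub>2 (\<lambda>p. T p + U p) q = \<Phi>\<^sub>2 T q + \<Phi>\<^sub>2 U q"
  by (cases q) (simp add: subst_tser_eq sum.distrib algebra_simps)

lemma subst_tser_sum: "\<Phi>\<^sub>2 (\<lambda>p. \<Sum>i\<in>I. f i p) q = (\<Sum>i\<in>I. \<Phi>\<^sub>2 (f i) q)"
proof (cases q)
  case (Pair u w)
  show ?thesis unfolding Pair subst_tser_eq sum_distrib_right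
    by (subst sum.swap, rule sum.cong[OF refl], rule sum.swap)
qed

lemma subst_tser_etens:
  "\<Phi>\<^sub>2 (etens s t) (u, w) =
   (if s \<in> lists A \<and> t \<in> lists A then subst_coeff M s u * subst_coeff M t w else 0)"
proof -
  have "\<Phi>\<^sub>2 (etens s t) (u, w) =
        (\<Sum>u'\<in>pre u. if u' = s then subst_coeff M u' u else 0) *
        (\<Sum>w'\<in>pre w. if w' = t then subst_coeff M w' w else 0)"
    unfolding subst_tser_eq sum_product by (intro sum.cong refl) (auto simp: etens_def)
  also have "\<dots> = (if s \<in> pre u then subst_coeff M s u else 0) * (if t \<in> pre w then subst_coeff M t w else 0)"
    by (simp add: sum.delta[OF finite_pre])
  finally show ?thesis by (auto simp: pre_words_def)
qed

lemma subst_tser_tone: "\<Phi>\<^sub>2 tone = tone"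
proof (rule ext, clarify)
  fix u w :: "'b list"
  have "(tone :: 'a tser) = etens [] []" by (auto simp: tone_def etens_def)
  then show "\<Phi>\<^sub>2 tone (u, w) = tone (u, w)"
    by (simp add: subst_tser_etens subst_coeff_Nil tone_def)
qed

lemma sum_img_letters_singleton:
  assumes "a \<in> A"
  shows "(\<Sum>b\<in>{b. b \<in> B \<and> M a b \<noteq> 0}. M a b * (if u = [b] then 1 else 0)) = subst_coeff M [a] u"
proof (cases "length u = 1")
  case True
  then obtain b' where u: "u = [b']" by (cases u) auto
  have "(\<Sum>b\<in>{b. b \<in> B \<and> M a b \<noteq> 0}. M a b * (if u = [b] then 1 else 0)) =
        (\<Sum>b\<in>{b. b \<in> B \<and> M a b \<noteq> 0}. if b = b' then M a b else 0)"
    using u by (intro sum.cong) auto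
  also have "\<dots> = M a b'"
    using finite_img_letters_in[OF assms] subst_letter_in[OF assms, of b'] by (auto simp: sum.delta)
  finally show ?thesis using u by simp
next
  case False
  then show ?thesis by (auto simp: subst_coeff_singleton intro!: sum.neutral)
qed

lemma subst_tser_prim:
  assumes "a \<in> A"
  shows "(\<lambda>p. \<Sum>b\<in>{b. b \<in> B \<and> M a b \<noteq> 0}. M a b * prim b p) = \<Phi>\<^sub>2 (prim a)"
proof (rule ext, clarify)
  fix u w
  let ?\<delta> = "\<lambda>x. \<Sum>b\<in>{b. b \<in> B \<and> M a b \<noteq> 0}. M a b * (if x = [b] then 1 else 0)"
  have "\<Phi>\<^sub>2 (prim a) (u, w) = \<Phi>\<^sub>2 (etens [a] []) (u, w) + \<Phi>\<^sub>2 (etens [] [a]) (u, w)"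
    unfolding prim_def by (rule subst_tser_add)
  also have "\<dots> = ?\<delta> u * (if w = [] then 1 else 0) + (if u = [] then 1 else 0) * ?\<delta> w"
    using assms by (simp add: subst_tser_etens sum_img_letters_singleton subst_coeff_Nil)
  also have "\<dots> = (\<Sum>b\<in>{b. b \<in> B \<and> M a b \<noteq> 0}. M a b * prim b (u, w))"
    by (simp add: prim_def etens_def sum_distrib_right sum_distrib_left sum.distrib[symmetric] algebra_simps)
  finally show "(\<Sum>b\<in>{b. b \<in> B \<and> M a b \<noteq> 0}. M a b * prim b (u, w)) = \<Phi>\<^sub>2 (prim a) (u, w)"
    by simp
qed

end

locale inverse_letter_substs = L: letter_subst A B M + L': letter_subst B A M'
  for A :: "'a set" and B :: "'b set" and M :: "'a \<Rightarrow> 'b \<Rightarrow> complex" and M' +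
  assumes right_inverse_letters: "a \<in> A \<Longrightarrow> c \<in> A \<Longrightarrow>
      (\<Sum>b\<in>{b. b \<in> B \<and> M a b \<noteq> 0}. M a b * M' b c) = (if a = c then 1 else 0)"
    and left_inverse_letters: "b \<in> B \<Longrightarrow> d \<in> B \<Longrightarrow>
      (\<Sum>a\<in>{a. a \<in> A \<and> M' b a \<noteq> 0}. M' b a * M a d) = (if b = d then 1 else 0)"
begin

lemma inverse_letter_substs_swap: "inverse_letter_substs B A M' M"
  by unfold_locales
    (assumption | rule L'.subst_letter_in L.subst_letter_in L'.finite_pre_letters L.finite_pre_letters
      L'.finite_img_letters L.finite_img_letters left_inverse_letters right_inverse_letters)+

lemma sum_subst_coeff_inverse:
  "v \<in> lists A \<Longrightarrow> u \<in> lists A \<Longrightarrow>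
   (\<Sum>x\<in>L.img v. subst_coeff M v x * subst_coeff M' x u) = (if v = u then 1 else 0)"
proof (induction v arbitrary: u)
  case Nil
  then show ?case by (cases u) (auto simp: L.img_Nil)
next
  case (Cons a v)
  have a: "a \<in> A" and v: "v \<in> lists A" using Cons.prems by auto
  have "(\<Sum>x\<in>L.img (a # v). subst_coeff M (a # v) x * subst_coeff M' x u) =
        (\<Sum>b\<in>{b. b \<in> B \<and> M a b \<noteq> 0}. \<Sum>x\<in>L.img v. M a b * subst_coeff M v x * subst_coeff M' (b # x) u)"
    by (simp add: L.img_Cons sum_cons_image mult.assoc)
  also have "\<dots> = (if a # v = u then 1 else 0)"
  proof (cases u)
    case (Cons c u')
    then have "c \<in> A" "u' \<in> lists A" using Cons.prems by auto
    have "(\<Sum>b\<in>{b. b \<in> B \<and> M a b \<noteq> 0}. \<Sum>x\<in>L.img v. M a b * subst_coeff M v x * subst_coeff M' (b # x) u)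
        = (\<Sum>b\<in>{b. b \<in> B \<and> M a b \<noteq> 0}. M a b * M' b c *
             (\<Sum>x\<in>L.img v. subst_coeff M v x * subst_coeff M' x u'))"
      by (simp add: Cons sum_distrib_left algebra_simps)
    also have "\<dots> = (\<Sum>b\<in>{b. b \<in> B \<and> M a b \<noteq> 0}. M a b * M' b c) * (if v = u' then 1 else 0)"
      using Cons.IH[OF v \<open>u' \<in> lists A\<close>] by (simp add: sum_distrib_right)
    also have "\<dots> = (if a # v = u then 1 else 0)"
      using right_inverse_letters[OF a \<open>c \<in> A\<close>] Cons by simp
    finally show ?thesis .
  qed simp
  finally show ?case .
qed

lemma subst_ser_inverse:
  assumes S: "\<And>w. S w \<noteq> 0 \<Longrightarrow> w \<in> lists A"
  shows "subst_ser B M' (subst_ser A M S) = S"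
proof
  fix u
  show "subst_ser B M' (subst_ser A M S) u = S u"
  proof (cases "u \<in> lists A")
    case False
    then have "subst_ser B M' (subst_ser A M S) u = 0" using L'.subst_ser_support by blast
    then show ?thesis using S False by fastforce
  next
    case u: True
    let ?V = "(\<Union>x\<in>L'.pre u. L.pre x) \<union> {u}"
    have finite_V: "finite ?V" using L.finite_pre L'.finite_pre by auto
    have "subst_ser B M' (subst_ser A M S) u =
          (\<Sum>x\<in>L'.pre u. \<Sum>v\<in>L.pre x. S v * subst_coeff M v x * subst_coeff M' x u)"
      by (simp add: subst_ser_def sum_distrib_right)
    also have "\<dots> = (\<Sum>v\<in>?V. \<Sum>x\<in>L.img v. S v * subst_coeff M v x * subst_coeff M' x u)"
    proof (rule sum_swap_on_support[OF L'.finite_pre L.finite_pre finite_V])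
      show "finite (L.img v)" if "v \<in> ?V" for v
        using that L.finite_img u by (auto simp: pre_words_def)
      fix x v assume "S v * subst_coeff M v x * subst_coeff M' x u \<noteq> 0"
      then have "v \<in> lists A" "subst_coeff M v x \<noteq> 0" "subst_coeff M' x u \<noteq> 0" using S by auto
      moreover from this have "x \<in> lists B" using L.subst_coeff_in_lists by blast
      ultimately show "x \<in> L'.pre u \<and> v \<in> L.pre x \<longleftrightarrow> v \<in> ?V \<and> x \<in> L.img v"
        by (auto simp: pre_words_def img_words_def)
    qed
    also have "\<dots> = (\<Sum>v\<in>?V. if v = u then S v else 0)"
    proof (rule sum.cong[OF refl])
      fix v
      show "(\<Sum>x\<in>L.img v. S v * subst_coeff M v x * subst_coeff M' x u) = (if v = u then S v else 0)"
        using sum_subst_coeff_inverse[of v u] u S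
        by (cases "S v = 0") (auto simp: sum_distrib_left[symmetric] mult.assoc)
    qed
    also have "\<dots> = S u" using finite_V by (simp add: sum.delta)
    finally show ?thesis .
  qed
qed

end

lemma subfield_sum: "is_subfield K \<Longrightarrow> (\<And>i. i \<in> I \<Longrightarrow> f i \<in> K) \<Longrightarrow> sum f I \<in> K"
  by (induction I rule: infinite_finite_induct) (simp_all add: is_subfield_def)

lemma subfield_power: "is_subfield K \<Longrightarrow> x \<in> K \<Longrightarrow> x ^ n \<in> K"
  by (induction n) (auto simp: is_subfield_def)

lemma subfield_of_nat: "is_subfield K \<Longrightarrow> of_nat n \<in> K"
  by (induction n) (auto simp: is_subfield_def)

lemma subfield_divide: "is_subfield K \<Longrightarrow> x \<in> K \<Longrightarrow> y \<in> K \<Longrightarrow> x / y \<in> K"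
  unfolding divide_inverse is_subfield_def by (cases "y = 0") auto

lemma subst_coeff_in_subfield:
  "is_subfield K \<Longrightarrow> (\<And>a b. a \<in> A \<Longrightarrow> M a b \<in> K) \<Longrightarrow> v \<in> lists A \<Longrightarrow> subst_coeff M v x \<in> K"
  by (induction M v x rule: subst_coeff.induct) (auto simp: is_subfield_def)

lemma subst_ser_in_subfield:
  assumes K: "is_subfield K" and "\<And>a b. a \<in> A \<Longrightarrow> M a b \<in> K" and "\<And>w. S w \<in> K"
  shows "subst_ser A M S x \<in> K"
  unfolding subst_ser_def
proof (rule subfield_sum[OF K])
  fix v assume "v \<in> pre_words A M x"
  then have "subst_coeff M v x \<in> K"
    using subst_coeff_in_subfield[OF K] assms(2) by (auto simp: pre_words_def)
  then show "S v * subst_coeff M v x \<in> K" using assms(3)[of v] K by (simp add: is_subfield_def)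
qed

lemma (in letter_subst) subst_ser_in_ser:
  assumes "is_subfield K" and "\<And>a b. a \<in> A \<Longrightarrow> M a b \<in> K" and "S \<in> ser K A"
  shows "\<Phi> S \<in> ser K B"
  unfolding ser_def mem_Collect_eq
proof (intro allI conjI impI)
  fix x
  show "\<Phi> S x \<in> K" using assms by (intro subst_ser_in_subfield) (auto simp: ser_def)
  show "x \<in> lists B" if "\<Phi> S x \<noteq> 0" using that by (rule subst_ser_support)
qed

lemma (in inverse_letter_substs) alg_iso_subst_ser:
  assumes K: "is_subfield K"
    and "\<And>a b. a \<in> A \<Longrightarrow> M a b \<in> K" and "\<And>b a. b \<in> B \<Longrightarrow> M' b a \<in> K"
  shows "alg_iso K A B (subst_ser A M)"
proof -
  interpret inv': inverse_letter_substs B A M' M by (rule inverse_letter_substs_swap)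
  have "bij_betw (subst_ser A M) (ser K A) (ser K B)"
  proof (rule bij_betw_byWitness[where f' = "subst_ser B M'"])
    show "\<forall>S\<in>ser K A. subst_ser B M' (subst_ser A M S) = S"
      by (auto simp: ser_def intro!: subst_ser_inverse)
    show "\<forall>T\<in>ser K B. subst_ser A M (subst_ser B M' T) = T"
      by (auto simp: ser_def intro!: inv'.subst_ser_inverse)
    show "subst_ser A M ` ser K A \<subseteq> ser K B"
      using assms L.subst_ser_in_ser by blast
    show "subst_ser B M' ` ser K B \<subseteq> ser K A"
      using assms L'.subst_ser_in_ser by blast
  qed
  then show ?thesis
    unfolding alg_iso_def
    using L.subst_ser_sadd L.subst_ser_smul L.subst_ser_scal L.subst_ser_sone by auto
qed

lemma wimg_eq_subst_coeff:
  assumes single: "\<And>a w. phi a w \<noteq> 0 \<Longrightarrow> length w = 1"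
  shows "wimg phi v = subst_coeff (\<lambda>a b. phi a [b]) v"
proof (induction v)
  case Nil
  show ?case by (rule ext) (simp add: wimg_def sone_def subst_coeff_Nil)
next
  case (Cons a v)
  show ?case
  proof
    fix x
    have "wimg phi (a # v) x = (\<Sum>i\<le>length x. phi a (take i x) * wimg phi v (drop i x))"
      by (simp add: wimg_def smul_def)
    also have "\<dots> = (\<Sum>i\<le>length x. if i = 1 then phi a (take 1 x) * wimg phi v (drop 1 x) else 0)"
    proof (rule sum.cong[OF refl])
      fix i assume "i \<in> {..length x}"
      then have "i \<noteq> 1 \<Longrightarrow> length (take i x) \<noteq> 1" by auto
      then show "phi a (take i x) * wimg phi v (drop i x) =
                 (if i = 1 then phi a (take 1 x) * wimg phi v (drop 1 x) else 0)"
        using single by fastforce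
    qed
    also have "\<dots> = subst_coeff (\<lambda>a b. phi a [b]) (a # v) x"
      using single[of a "[]"] Cons.IH by (cases x) (auto simp: Suc_le_eq)
    finally show "wimg phi (a # v) x = subst_coeff (\<lambda>a b. phi a [b]) (a # v) x" .
  qed
qed

lemma ext_eq_subst_ser:
  assumes "\<And>a w. phi a w \<noteq> 0 \<Longrightarrow> length w = 1"
  shows "ext A phi = subst_ser A (\<lambda>a b. phi a [b])"
  by (intro HOL.ext) (simp add: Defs.ext_def subst_ser_def pre_words_def wimg_eq_subst_coeff[OF assms])

lemma tmap_eq_subst_tser:
  assumes "\<And>a w. phi a w \<noteq> 0 \<Longrightarrow> length w = 1"
  shows "tmap A phi = subst_tser A (\<lambda>a b. phi a [b])"
proof (intro HOL.ext)
  fix T :: "'a tser" and p :: "'b list \<times> 'b list"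
  obtain u v where p: "p = (u, v)" by fastforce
  have "{(u', v'). u' \<in> lists A \<and> v' \<in> lists A \<and> wimg phi u' u \<noteq> 0 \<and> wimg phi v' v \<noteq> 0} =
        pre_words A (\<lambda>a b. phi a [b]) u \<times> pre_words A (\<lambda>a b. phi a [b]) v"
    by (auto simp: pre_words_def wimg_eq_subst_coeff[OF assms])
  then show "tmap A phi T p = subst_tser A (\<lambda>a b. phi a [b]) T p"
    unfolding p tmap_def subst_tser_def by (simp add: wimg_eq_subst_coeff[OF assms] case_prod_unfold)
qed

section \<open>Compatibility with coproducts\<close>

lemma twimg_Nil [simp]: "twimg D [] = tone"
  by (simp add: twimg_def)

lemma twimg_Cons [simp]: "twimg D (a # x) = tmul (D a) (twimg D x)"
  by (simp add: twimg_def)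

lemma tmul_sum_left: "tmul (\<lambda>p. \<Sum>i\<in>I. f i p) U q = (\<Sum>i\<in>I. tmul (f i) U q)"
proof (cases q)
  case (Pair u w)
  show ?thesis unfolding Pair tmul_def split sum_distrib_right
    by (subst (2) sum.swap) (rule sum.cong[OF refl], rule sum.swap)
qed

lemma tmul_sum_right: "tmul T (\<lambda>p. \<Sum>i\<in>I. f i p) q = (\<Sum>i\<in>I. tmul T (f i) q)"
proof (cases q)
  case (Pair u w)
  show ?thesis unfolding Pair tmul_def split sum_distrib_left
    by (subst (2) sum.swap) (rule sum.cong[OF refl], rule sum.swap)
qed

lemma tmul_scale_left: "tmul (\<lambda>p. c * T p) U q = c * tmul T U q"
  by (cases q) (simp add: tmul_def sum_distrib_left algebra_simps)

lemma tmul_scale_right: "tmul T (\<lambda>p. c * U p) q = c * tmul T U q"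
  by (cases q) (simp add: tmul_def sum_distrib_left algebra_simps)

definition weight :: "('a \<Rightarrow> nat) \<Rightarrow> 'a list \<Rightarrow> nat" where
  "weight g u = sum_list (map g u)"

lemma weight_Nil [simp]: "weight g [] = 0"
  by (simp add: weight_def)

lemma weight_Cons [simp]: "weight g (a # x) = g a + weight g x"
  by (simp add: weight_def)

lemma weight_take_drop: "weight g u = weight g (take i u) + weight g (drop i u)"
  by (metis append_take_drop_id map_append sum_list_append weight_def)

lemma prim_weight: "prim a (u, w) \<noteq> 0 \<Longrightarrow> weight g u + weight g w = g a"
  by (auto simp: prim_def etens_def weight_def split: if_splits)

definition tens_support :: "'a set \<Rightarrow> ('a \<Rightarrow> 'a tser) \<Rightarrow> 'a list \<times> 'a list \<Rightarrow> 'a list set" where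
  "tens_support A D p = {v. v \<in> lists A \<and> twimg D v p \<noteq> 0}"

lemma tens_ext_eq: "tens_ext A D S p = (\<Sum>v\<in>tens_support A D p. S v * twimg D v p)"
  by (simp add: tens_ext_def tens_support_def)

(* The grading makes the sets summed over in tens_ext finite (an infinite sum would be 0). *)
locale graded_coproduct =
  fixes A :: "'a set" and D :: "'a \<Rightarrow> 'a tser" and g :: "'a \<Rightarrow> nat"
  assumes weight_pos: "a \<in> A \<Longrightarrow> 1 \<le> g a"
    and finite_weight_le: "finite {a. a \<in> A \<and> g a \<le> n}"
    and coproduct_homogeneous: "a \<in> A \<Longrightarrow> D a (u, w) \<noteq> 0 \<Longrightarrow> weight g u + weight g w = g a"
begin

lemma twimg_homogeneous:
  "x \<in> lists A \<Longrightarrow> twimg D x (u, w) \<noteq> 0 \<Longrightarrow> weight g u + weight g w = weight g x"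
proof (induction x arbitrary: u w)
  case Nil
  then show ?case by (auto simp: tone_def split: if_splits)
next
  case (Cons a x)
  then have "(\<Sum>i\<le>length u. \<Sum>j\<le>length w. D a (take i u, take j w) * twimg D x (drop i u, drop j w)) \<noteq> 0"
    by (simp add: tmul_def)
  then obtain i j where "D a (take i u, take j w) * twimg D x (drop i u, drop j w) \<noteq> 0"
    by (meson sum.not_neutral_contains_not_neutral)
  with Cons have "weight g (take i u) + weight g (take j w) = g a"
    and "weight g (drop i u) + weight g (drop j w) = weight g x"
    by (auto intro: coproduct_homogeneous)
  then show ?case using weight_take_drop[of g u i] weight_take_drop[of g w j] by simp
qed

lemma length_le_weight: "x \<in> lists A \<Longrightarrow> length x \<le> weight g x"
  by (induction x) (auto dest: weight_pos)

lemma letter_weight_le: "a \<in> set x \<Longrightarrow> g a \<le> weight g x"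
  by (induction x) auto

lemma finite_tens_support: "finite (tens_support A D p)"
proof -
  obtain u w where p: "p = (u, w)" by fastforce
  define n where "n = weight g u + weight g w"
  have "tens_support A D p \<subseteq> {x. set x \<subseteq> {a. a \<in> A \<and> g a \<le> n} \<and> length x \<le> n}"
  proof
    fix x assume "x \<in> tens_support A D p"
    then have x: "x \<in> lists A" and "twimg D x (u, w) \<noteq> 0" using p by (auto simp: tens_support_def)
    then have "weight g x = n" using twimg_homogeneous n_def by simp
    then show "x \<in> {x. set x \<subseteq> {a. a \<in> A \<and> g a \<le> n} \<and> length x \<le> n}"
      using x letter_weight_le[of _ x] length_le_weight[OF x] by auto
  qed
  then show ?thesis by (rule finite_subset) (rule finite_lists_length_le[OF finite_weight_le])
qed

end

lemma graded_coproduct_prim: assumes "finite A" shows "graded_coproduct A prim (\<lambda>_. 1)"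
proof
  show "finite {a. a \<in> A \<and> (1::nat) \<le> n}" for n using assms by simp
qed (auto intro: prim_weight)

locale compatible_coproducts = letter_subst A B M + cA: graded_coproduct A DA gA + cB: graded_coproduct B DB gB
  for A :: "'a set" and B :: "'b set" and M DA gA DB gB +
  assumes compatible_letters:
    "a \<in> A \<Longrightarrow> (\<lambda>p. \<Sum>b\<in>{b. b \<in> B \<and> M a b \<noteq> 0}. M a b * DB b p) = \<Phi>\<^sub>2 (DA a)"
begin

lemma subst_twimg:
  "v \<in> lists A \<Longrightarrow> (\<lambda>p. \<Sum>x\<in>img v. subst_coeff M v x * twimg DB x p) = \<Phi>\<^sub>2 (twimg DA v)"
proof (induction v)
  case Nil
  show ?case by (simp add: img_Nil subst_tser_tone)
next
  case (Cons a v)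
  then have a: "a \<in> A" and v: "v \<in> lists A" by auto
  show ?case
  proof
    fix p
    have "(\<Sum>x\<in>img (a # v). subst_coeff M (a # v) x * twimg DB x p) =
      (\<Sum>b\<in>{b. b \<in> B \<and> M a b \<noteq> 0}. \<Sum>x\<in>img v. M a b * (subst_coeff M v x * tmul (DB b) (twimg DB x) p))"
      by (simp add: img_Cons sum_cons_image mult.assoc)
    also have "\<dots> = tmul (\<lambda>p. \<Sum>b\<in>{b. b \<in> B \<and> M a b \<noteq> 0}. M a b * DB b p)
                          (\<lambda>p. \<Sum>x\<in>img v. subst_coeff M v x * twimg DB x p) p"
      by (simp add: tmul_sum_left tmul_sum_right tmul_scale_left tmul_scale_right)
    also have "\<dots> = \<Phi>\<^sub>2 (twimg DA (a # v)) p"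
      using compatible_letters[OF a] Cons.IH[OF v] by (simp add: subst_tser_tmul)
    finally show "(\<Sum>x\<in>img (a # v). subst_coeff M (a # v) x * twimg DB x p) = \<Phi>\<^sub>2 (twimg DA (a # v)) p" .
  qed
qed

lemma tens_ext_subst_ser_eq:
  "tens_ext B DB (\<Phi> S) p = (\<Sum>v\<in>(\<Union>x\<in>tens_support B DB p. pre x). S v * \<Phi>\<^sub>2 (twimg DA v) p)"
proof -
  have "tens_ext B DB (\<Phi> S) p =
        (\<Sum>x\<in>tens_support B DB p. \<Sum>v\<in>pre x. S v * (subst_coeff M v x * twimg DB x p))"
    by (simp add: tens_ext_eq subst_ser_def sum_distrib_right mult.assoc)
  also have "\<dots> = (\<Sum>v\<in>(\<Union>x\<in>tens_support B DB p. pre x). \<Sum>x\<in>img v. S v * (subst_coeff M v x * twimg DB x p))"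
  proof (rule sum_swap_on_support[OF cB.finite_tens_support finite_pre])
    show "finite (\<Union>x\<in>tens_support B DB p. pre x)"
      by (simp add: cB.finite_tens_support finite_pre)
    show "finite (img v)" if "v \<in> (\<Union>x\<in>tens_support B DB p. pre x)" for v
      using that finite_img by (auto simp: pre_words_def)
    fix x v assume "S v * (subst_coeff M v x * twimg DB x p) \<noteq> 0"
    then show "x \<in> tens_support B DB p \<and> v \<in> pre x \<longleftrightarrow> v \<in> (\<Union>x\<in>tens_support B DB p. pre x) \<and> x \<in> img v"
      using subst_coeff_in_lists by (auto simp: pre_words_def img_words_def tens_support_def)
  qed
  also have "\<dots> = (\<Sum>v\<in>(\<Union>x\<in>tens_support B DB p. pre x). S v * \<Phi>\<^sub>2 (twimg DA v) p)"
    by (rule sum.cong[OF refl])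
      (auto simp: pre_words_def sum_distrib_left[symmetric] subst_twimg[symmetric])
  finally show ?thesis .
qed

lemma subst_tser_tens_ext_eq:
  "\<Phi>\<^sub>2 (tens_ext A DA S) (u, w) =
   (\<Sum>v\<in>(\<Union>q\<in>pre u \<times> pre w. tens_support A DA q). S v * \<Phi>\<^sub>2 (twimg DA v) (u, w))"
proof -
  let ?X = "pre u \<times> pre w"
  let ?c = "\<lambda>q. subst_coeff M (fst q) u * subst_coeff M (snd q) w"
  have "\<Phi>\<^sub>2 (tens_ext A DA S) (u, w) = (\<Sum>q\<in>?X. \<Sum>v\<in>tens_support A DA q. S v * (twimg DA v q * ?c q))"
    by (simp add: subst_tser_def tens_ext_eq case_prod_unfold sum_distrib_left sum_distrib_right mult_ac)
  also have "\<dots> = (\<Sum>v\<in>(\<Union>q\<in>?X. tens_support A DA q). \<Sum>q\<in>?X. S v * (twimg DA v q * ?c q))"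
    by (rule sum_swap_on_support)
      (use finite_pre cA.finite_tens_support in \<open>auto simp: tens_support_def\<close>)
  also have "\<dots> = (\<Sum>v\<in>(\<Union>q\<in>?X. tens_support A DA q). S v * \<Phi>\<^sub>2 (twimg DA v) (u, w))"
    by (simp add: subst_tser_def case_prod_unfold sum_distrib_left algebra_simps)
  finally show ?thesis .
qed

lemma subst_twimg_support:
  assumes v: "v \<in> lists A" and nz: "\<Phi>\<^sub>2 (twimg DA v) (u, w) \<noteq> 0"
  shows "v \<in> (\<Union>x\<in>tens_support B DB (u, w). pre x)"
    and "v \<in> (\<Union>q\<in>pre u \<times> pre w. tens_support A DA q)"
proof -
  have "(\<Sum>x\<in>img v. subst_coeff M v x * twimg DB x (u, w)) \<noteq> 0"
    using nz fun_cong[OF subst_twimg[OF v], of "(u, w)"] by simp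
  then obtain x where "x \<in> img v" "subst_coeff M v x * twimg DB x (u, w) \<noteq> 0"
    by (meson sum.not_neutral_contains_not_neutral)
  then show "v \<in> (\<Union>x\<in>tens_support B DB (u, w). pre x)"
    using v by (auto simp: img_words_def pre_words_def tens_support_def)
  have "(\<Sum>q\<in>pre u \<times> pre w. twimg DA v q * subst_coeff M (fst q) u * subst_coeff M (snd q) w) \<noteq> 0"
    using nz by (simp add: subst_tser_def case_prod_unfold)
  then obtain q where "q \<in> pre u \<times> pre w"
    "twimg DA v q * subst_coeff M (fst q) u * subst_coeff M (snd q) w \<noteq> 0"
    by (meson sum.not_neutral_contains_not_neutral)
  then show "v \<in> (\<Union>q\<in>pre u \<times> pre w. tens_support A DA q)"
    using v by (auto simp: tens_support_def)
qed

(* Both sides are sums of S v * \<Phi>\<^sub>2 (twimg DA v) p over two finite sets of words, each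
  containing all non-vanishing terms. *)
theorem tens_ext_subst_ser: "tens_ext B DB (\<Phi> S) = \<Phi>\<^sub>2 (tens_ext A DA S)"
proof (rule ext, clarify)
  fix u w
  define V1 where "V1 = (\<Union>x\<in>tens_support B DB (u, w). pre x)"
  define V2 where "V2 = (\<Union>q\<in>pre u \<times> pre w. tens_support A DA q)"
  have fin: "finite V1" "finite V2"
    unfolding V1_def V2_def by (simp_all add: cA.finite_tens_support cB.finite_tens_support finite_pre)
  have vanish: "S v * \<Phi>\<^sub>2 (twimg DA v) (u, w) = 0" if "v \<in> V1 \<union> V2" "v \<notin> V1 \<inter> V2" for v
  proof (rule ccontr)
    assume nz: "S v * \<Phi>\<^sub>2 (twimg DA v) (u, w) \<noteq> 0"
    with that have "v \<in> lists A" by (auto simp: V1_def V2_def pre_words_def tens_support_def)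
    moreover have "\<Phi>\<^sub>2 (twimg DA v) (u, w) \<noteq> 0" using nz by simp
    ultimately have "v \<in> V1" "v \<in> V2" unfolding V1_def V2_def by (rule subst_twimg_support)+
    with that show False by blast
  qed
  show "tens_ext B DB (\<Phi> S) (u, w) = \<Phi>\<^sub>2 (tens_ext A DA S) (u, w)"
    unfolding tens_ext_subst_ser_eq subst_tser_tens_ext_eq V1_def[symmetric] V2_def[symmetric]
    by (rule sum.mono_neutral_cong) (use fin vanish in auto)
qed

end

section \<open>Roots of unity and the discrete Fourier transform\<close>

lemma zeta_power: "zeta N ^ k = cis (2 * pi * real k / real N)"
proof -
  have "zeta N = cis (2 * pi / real N)"
    by (simp add: zeta_def cis_conv_exp mult.commute)
  moreover have "real k * (2 * pi / real N) = 2 * pi * real k / real N" by simp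
  ultimately show ?thesis by (simp only: DeMoivre)
qed

lemma zeta_power_N: "N > 0 \<Longrightarrow> zeta N ^ N = 1"
  by (simp add: zeta_power)

lemma finite_mu: "N > 0 \<Longrightarrow> finite (mu N)"
  unfolding mu_def by (rule finite_roots_unity) simp

lemma zeta_power_in_mu: "N > 0 \<Longrightarrow> zeta N ^ m \<in> mu N"
  using zeta_power_N[of N] by (simp add: mu_def flip: power_mult) (simp add: power_mult mult.commute[of m])

lemma mu_nonzero: "N > 0 \<Longrightarrow> z \<in> mu N \<Longrightarrow> z \<noteq> 0"
  by (auto simp: mu_def zero_power)

lemma mu_mult: "z \<in> mu N \<Longrightarrow> w \<in> mu N \<Longrightarrow> z * w \<in> mu N"
  by (simp add: mu_def power_mult_distrib)

lemma mu_inverse: "z \<in> mu N \<Longrightarrow> inverse z \<in> mu N"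
  by (simp add: mu_def power_inverse)

lemma bij_betw_zeta_power: assumes N: "N > 0" shows "bij_betw (\<lambda>m. zeta N ^ m) {1..N} (mu N)"
proof -
  have img: "(\<lambda>m. zeta N ^ m) ` {1..N} = mu N"
  proof
    show "(\<lambda>m. zeta N ^ m) ` {1..N} \<subseteq> mu N" using zeta_power_in_mu[OF N] by auto
    show "mu N \<subseteq> (\<lambda>m. zeta N ^ m) ` {1..N}"
    proof
      fix z assume "z \<in> mu N"
      then obtain k where k: "k < N" "z = cis (2 * pi * real k / real N)"
        using bij_betw_roots_unity[OF N] unfolding mu_def bij_betw_def by auto
      show "z \<in> (\<lambda>m. zeta N ^ m) ` {1..N}"
      proof (cases "k = 0")
        case True
        then have "z = zeta N ^ N" using k zeta_power_N[OF N] by simp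
        then show ?thesis using N by auto
      next
        case False
        then have "z = zeta N ^ k" using k by (simp add: zeta_power)
        then show ?thesis using False k by auto
      qed
    qed
  qed
  have "card ((\<lambda>m. zeta N ^ m) ` {1..N}) = card {1..N}"
    by (simp only: img) (simp add: mu_def card_roots_unity_eq[OF N])
  then have "inj_on (\<lambda>m. zeta N ^ m) {1..N}"
    by (rule eq_card_imp_inj_on[rotated]) simp
  with img show ?thesis by (simp add: bij_betw_def)
qed

lemma zeta_power_inj:
  "N > 0 \<Longrightarrow> m \<in> {1..N} \<Longrightarrow> n \<in> {1..N} \<Longrightarrow> zeta N ^ m = zeta N ^ n \<Longrightarrow> m = n"
  using bij_betw_zeta_power unfolding bij_betw_def inj_on_def by blast

lemma bij_betw_iota_inv: assumes N: "N > 0" shows "bij_betw (iota_inv N) {..<N} {1..N}"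
proof (rule bij_betw_byWitness[where f' = "\<lambda>m. m mod N"])
  show "\<forall>m\<in>{1..N}. iota_inv N (m mod N) = m"
  proof
    fix m assume m: "m \<in> {1..N}"
    show "iota_inv N (m mod N) = m"
      using m by (cases "m = N") (auto simp: iota_inv_def)
  qed
qed (use N in \<open>auto simp: iota_inv_def\<close>)

lemma sum_powers_mu:
  assumes N: "N > 0" and y: "y \<in> mu N"
  shows "(\<Sum>m=1..N. y ^ m) = (if y = 1 then of_nat N else 0)"
proof (cases "y = 1")
  case False
  have "(\<Sum>m=1..N. y ^ m) = y * (\<Sum>m<N. y ^ m)"
    by (simp add: sum.atLeast1_atMost_eq sum_distrib_left)
  also have "(\<Sum>m<N. y ^ m) = (y ^ N - 1) / (y - 1)"
    using False by (rule geometric_sum)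
  finally show ?thesis using False y by (simp add: mu_def)
qed simp

lemma sum_mu_characters:
  assumes N: "N > 0" and "i \<in> {1..N}" "j \<in> {1..N}"
  shows "(\<Sum>z\<in>mu N. inverse z ^ i * z ^ j) = (if i = j then of_nat N else 0)"
proof -
  define y where "y = inverse (zeta N ^ i) * zeta N ^ j"
  have "(\<Sum>z\<in>mu N. inverse z ^ i * z ^ j) = (\<Sum>m\<in>{1..N}. inverse (zeta N ^ m) ^ i * (zeta N ^ m) ^ j)"
    by (rule sum.reindex_bij_betw[OF bij_betw_zeta_power[OF N], symmetric])
  also have "\<dots> = (\<Sum>m\<in>{1..N}. y ^ m)"
    by (rule sum.cong[OF refl])
      (simp add: y_def power_mult_distrib power_inverse power_mult[symmetric] mult.commute)
  also have "\<dots> = (if y = 1 then of_nat N else 0)"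
    by (rule sum_powers_mu[OF N]) (simp add: y_def mu_mult mu_inverse zeta_power_in_mu N)
  also have "y = 1 \<longleftrightarrow> i = j"
    using mu_nonzero[OF N zeta_power_in_mu[OF N]] zeta_power_inj[OF N assms(3,2)]
    by (auto simp: y_def field_simps)
  finally show ?thesis .
qed

lemma sum_iota_inv_characters:
  assumes N: "N > 0" and z: "z \<in> mu N" and w: "w \<in> mu N"
  shows "(\<Sum>\<alpha><N. z ^ iota_inv N \<alpha> * inverse w ^ iota_inv N \<alpha>) = (if z = w then of_nat N else 0)"
proof -
  define y where "y = z * inverse w"
  have "(\<Sum>\<alpha><N. z ^ iota_inv N \<alpha> * inverse w ^ iota_inv N \<alpha>) = (\<Sum>\<alpha><N. y ^ iota_inv N \<alpha>)"
    by (simp add: y_def power_mult_distrib)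
  also have "\<dots> = (\<Sum>m\<in>{1..N}. y ^ m)"
    by (rule sum.reindex_bij_betw[OF bij_betw_iota_inv[OF N]])
  also have "\<dots> = (if y = 1 then of_nat N else 0)"
    by (rule sum_powers_mu[OF N]) (simp add: y_def mu_mult mu_inverse z w)
  also have "y = 1 \<longleftrightarrow> z = w"
    using mu_nonzero[OF N w] by (auto simp: y_def field_simps)
  finally show ?thesis .
qed

(* The coefficients of F_letter and FY_letter: since m \<mapsto> \<zeta>\<^sub>N\<^sup>m is a
  bijection from {1..N} onto \<mu>\<^sub>N, the letter indexed by z receives the coefficient z\<^sup>-\<^sup>i. *)
lemma sum_zeta_powers_indicator:
  assumes N: "N > 0"
  shows "(\<Sum>m=1..N. zeta N powi (- int (m * i)) * (if z = zeta N ^ m then 1 else 0)) =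
         (if z \<in> mu N then inverse z ^ i else 0)"
proof (cases "z \<in> mu N")
  case True
  then obtain m0 where m0: "m0 \<in> {1..N}" "z = zeta N ^ m0"
    using bij_betw_imp_surj_on[OF bij_betw_zeta_power[OF N]] by blast
  have "(\<Sum>m=1..N. zeta N powi (- int (m * i)) * (if z = zeta N ^ m then 1 else 0)) =
        (\<Sum>m\<in>{1..N}. if m = m0 then zeta N powi (- int (m0 * i)) else 0)"
    using m0 zeta_power_inj[OF N] by (intro sum.cong) auto
  also have "\<dots> = inverse (zeta N powi int (m0 * i))"
    using m0 by (simp add: power_int_minus)
  also have "\<dots> = inverse z ^ i"
    by (simp only: power_int_of_nat m0(2) power_mult power_inverse)
  finally show ?thesis using True by simp
next
  case False
  then have "z \<noteq> zeta N ^ m" for m using zeta_power_in_mu[OF N, of m] by auto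
  with False show ?thesis by simp
qed

definition fourier_coeff :: "nat \<Rightarrow> nat \<Rightarrow> complex \<Rightarrow> complex" where
  "fourier_coeff N \<alpha> z = (if z \<in> mu N then inverse z ^ iota_inv N \<alpha> else 0)"

definition inv_fourier_coeff :: "nat \<Rightarrow> complex \<Rightarrow> nat \<Rightarrow> complex" where
  "inv_fourier_coeff N z \<alpha> = z ^ iota_inv N \<alpha> / of_nat N"

lemma fourier_coeff_mult:
  "z1 \<in> mu N \<Longrightarrow> z2 \<in> mu N \<Longrightarrow>
   fourier_coeff N \<alpha> (z1 * z2) = fourier_coeff N \<alpha> z1 * fourier_coeff N \<alpha> z2"
  by (simp add: fourier_coeff_def mu_mult power_mult_distrib)

lemma fourier_orthogonal_left:
  assumes N: "N > 0" and "\<alpha> < N" "\<beta> < N"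
  shows "(\<Sum>z\<in>mu N. fourier_coeff N \<alpha> z * inv_fourier_coeff N z \<beta>) = (if \<alpha> = \<beta> then 1 else 0)"
proof -
  have "iota_inv N \<alpha> \<in> {1..N}" "iota_inv N \<beta> \<in> {1..N}" "iota_inv N \<alpha> = iota_inv N \<beta> \<longleftrightarrow> \<alpha> = \<beta>"
    using bij_betw_iota_inv[OF N] assms(2,3) by (auto simp: bij_betw_def inj_on_def)
  then show ?thesis
    using sum_mu_characters[OF N] N
    by (simp add: fourier_coeff_def inv_fourier_coeff_def sum_divide_distrib[symmetric])
qed

lemma fourier_orthogonal_right:
  assumes N: "N > 0" and "z \<in> mu N" "w \<in> mu N"
  shows "(\<Sum>\<alpha><N. inv_fourier_coeff N z \<alpha> * fourier_coeff N \<alpha> w) = (if z = w then 1 else 0)"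
proof -
  have "(\<Sum>\<alpha><N. inv_fourier_coeff N z \<alpha> * fourier_coeff N \<alpha> w) =
        (\<Sum>\<alpha><N. z ^ iota_inv N \<alpha> * inverse w ^ iota_inv N \<alpha>) / of_nat N"
    using assms(3) by (simp add: fourier_coeff_def inv_fourier_coeff_def sum_divide_distrib)
  also have "\<dots> = (if z = w then 1 else 0)"
    using sum_iota_inv_characters[OF assms] N by simp
  finally show ?thesis .
qed

lemma QmuN_subfield: "is_subfield (QmuN N)"
  unfolding is_subfield_def QmuN_def by (auto simp: is_subfield_def)

lemma mu_subset_QmuN: "mu N \<subseteq> QmuN N"
  unfolding QmuN_def by auto

lemma fourier_coeff_in_QmuN: "fourier_coeff N \<alpha> z \<in> QmuN N"
proof (cases "z \<in> mu N")
  case True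
  then have "inverse z \<in> QmuN N" using mu_subset_QmuN mu_inverse by blast
  then show ?thesis using True QmuN_subfield by (simp add: fourier_coeff_def subfield_power)
qed (use QmuN_subfield in \<open>simp add: fourier_coeff_def is_subfield_def\<close>)

lemma inv_fourier_coeff_in_QmuN: "z \<in> mu N \<Longrightarrow> inv_fourier_coeff N z \<alpha> \<in> QmuN N"
  using QmuN_subfield mu_subset_QmuN
  by (auto simp: inv_fourier_coeff_def intro!: subfield_divide subfield_power subfield_of_nat)

section \<open>The map F\<close>

definition FX_matrix :: "nat \<Rightarrow> xtl \<Rightarrow> xl \<Rightarrow> complex" where
  "FX_matrix N a b = F_letter N a [b]"

definition FX_inv_matrix :: "nat \<Rightarrow> xl \<Rightarrow> xtl \<Rightarrow> complex" where
  "FX_inv_matrix N b a = (case (b, a) of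
      (X0, XT) \<Rightarrow> 1
    | (XZ z, XTA \<alpha>) \<Rightarrow> if \<alpha> < N then inv_fourier_coeff N z \<alpha> else 0
    | _ \<Rightarrow> 0)"

lemma FX_matrix_simps:
  "FX_matrix N XT b = (if b = X0 then 1 else 0)"
  "FX_matrix N (XTA \<alpha>) X0 = 0"
  "N > 0 \<Longrightarrow> FX_matrix N (XTA \<alpha>) (XZ z) = fourier_coeff N \<alpha> z"
proof -
  show "FX_matrix N XT b = (if b = X0 then 1 else 0)" "FX_matrix N (XTA \<alpha>) X0 = 0"
    by (simp_all add: FX_matrix_def F_letter_def sletter_def)
  assume "N > 0"
  have "FX_matrix N (XTA \<alpha>) (XZ z) =
        (\<Sum>m=1..N. zeta N powi (- int (m * iota_inv N \<alpha>)) * (if z = zeta N ^ m then 1 else 0))"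
    by (simp add: FX_matrix_def F_letter_def sletter_def)
  then show "FX_matrix N (XTA \<alpha>) (XZ z) = fourier_coeff N \<alpha> z"
    by (simp only: sum_zeta_powers_indicator[OF \<open>N > 0\<close>] fourier_coeff_def)
qed

lemma F_letter_length: "F_letter N a w \<noteq> 0 \<Longrightarrow> length w = 1"
proof (cases a)
  case XT
  assume "F_letter N a w \<noteq> 0"
  then show ?thesis using XT by (auto simp: F_letter_def sletter_def split: if_splits)
next
  case (XTA \<alpha>)
  assume "F_letter N a w \<noteq> 0"
  then have "(\<Sum>m=1..N. zeta N powi (- int (m * iota_inv N \<alpha>)) * sletter (XZ (zeta N ^ m)) w) \<noteq> 0"
    using XTA by (simp add: F_letter_def)
  then obtain m where "zeta N powi (- int (m * iota_inv N \<alpha>)) * sletter (XZ (zeta N ^ m)) w \<noteq> 0"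
    by (meson sum.not_neutral_contains_not_neutral)
  then show ?thesis by (auto simp: sletter_def split: if_splits)
qed

lemma FX_eq: "FX N = subst_ser (alphXt N) (FX_matrix N)"
  unfolding FX_def FX_matrix_def by (rule ext_eq_subst_ser) (rule F_letter_length)

lemma tmap_F_letter_eq: "tmap (alphXt N) (F_letter N) = subst_tser (alphXt N) (FX_matrix N)"
  unfolding FX_matrix_def by (rule tmap_eq_subst_tser) (rule F_letter_length)

lemma finite_alphX: "N > 0 \<Longrightarrow> finite (alphX N)"
  by (simp add: alphX_def finite_mu)

lemma finite_alphXt: "finite (alphXt N)"
  by (simp add: alphXt_def)

lemma sum_alphX: "N > 0 \<Longrightarrow> (\<Sum>b\<in>alphX N. f b) = f X0 + (\<Sum>z\<in>mu N. f (XZ z))"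
  unfolding alphX_def by (subst sum.insert) (auto simp: finite_mu sum.reindex inj_on_def)

lemma sum_alphXt: "(\<Sum>a\<in>alphXt N. f a) = f XT + (\<Sum>\<alpha><N. f (XTA \<alpha>))"
  unfolding alphXt_def by (subst sum.insert) (auto simp: sum.reindex inj_on_def)

lemma letter_subst_FX: assumes N: "N > 0" shows "letter_subst (alphXt N) (alphX N) (FX_matrix N)"
proof
  show "b \<in> alphX N" if "a \<in> alphXt N" "FX_matrix N a b \<noteq> 0" for a b
    using that by (cases a; cases b) (auto simp: FX_matrix_simps N alphX_def fourier_coeff_def split: if_splits)
  then show "finite {b. FX_matrix N a b \<noteq> 0}" if "a \<in> alphXt N" for a
    using that finite_alphX[OF N] by (blast intro: rev_finite_subset)
qed (rule rev_finite_subset[OF finite_alphXt], blast)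

lemma letter_subst_FX_inv: assumes N: "N > 0" shows "letter_subst (alphX N) (alphXt N) (FX_inv_matrix N)"
proof
  show "a \<in> alphXt N" if "FX_inv_matrix N b a \<noteq> 0" for a b
    using that by (auto simp: FX_inv_matrix_def alphXt_def split: xl.splits xtl.splits if_splits)
  then show "finite {a. FX_inv_matrix N b a \<noteq> 0}" for b
    using finite_alphXt by (blast intro: rev_finite_subset)
qed (rule rev_finite_subset[OF finite_alphX[OF N]], blast)

lemma inverse_letter_substs_FX:
  assumes N: "N > 0"
  shows "inverse_letter_substs (alphXt N) (alphX N) (FX_matrix N) (FX_inv_matrix N)"
proof -
  interpret L: letter_subst "alphXt N" "alphX N" "FX_matrix N" by (rule letter_subst_FX[OF N])
  interpret L': letter_subst "alphX N" "alphXt N" "FX_inv_matrix N" by (rule letter_subst_FX_inv[OF N])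
  show ?thesis
  proof
    fix a c assume a: "a \<in> alphXt N" and c: "c \<in> alphXt N"
    have "(\<Sum>b\<in>{b. b \<in> alphX N \<and> FX_matrix N a b \<noteq> 0}. FX_matrix N a b * FX_inv_matrix N b c) =
          FX_matrix N a X0 * FX_inv_matrix N X0 c +
          (\<Sum>z\<in>mu N. FX_matrix N a (XZ z) * FX_inv_matrix N (XZ z) c)"
      by (simp add: L.sum_img_letters_superset[OF a finite_alphX[OF N]] sum_alphX[OF N])
    also have "\<dots> = (if a = c then 1 else 0)"
      using a c fourier_orthogonal_left[OF N]
      by (cases a; cases c) (auto simp: FX_matrix_simps N FX_inv_matrix_def alphXt_def)
    finally show "(\<Sum>b\<in>{b. b \<in> alphX N \<and> FX_matrix N a b \<noteq> 0}. FX_matrix N a b * FX_inv_matrix N b c) =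
          (if a = c then 1 else 0)" .
  next
    fix b d assume b: "b \<in> alphX N" and d: "d \<in> alphX N"
    have "(\<Sum>a\<in>{a. a \<in> alphXt N \<and> FX_inv_matrix N b a \<noteq> 0}. FX_inv_matrix N b a * FX_matrix N a d) =
          FX_inv_matrix N b XT * FX_matrix N XT d +
          (\<Sum>\<alpha><N. FX_inv_matrix N b (XTA \<alpha>) * FX_matrix N (XTA \<alpha>) d)"
      by (subst L'.sum_img_letters_superset[OF b finite_alphXt]) (auto simp: sum_alphXt)
    also have "\<dots> = (if b = d then 1 else 0)"
      using b d fourier_orthogonal_right[OF N]
      by (cases b; cases d) (auto simp: FX_matrix_simps N FX_inv_matrix_def alphX_def)
    finally show "(\<Sum>a\<in>{a. a \<in> alphXt N \<and> FX_inv_matrix N b a \<noteq> 0}. FX_inv_matrix N b a * FX_matrix N a d) =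
          (if b = d then 1 else 0)" .
  qed
qed

lemma FX_matrix_in_QmuN: "N > 0 \<Longrightarrow> FX_matrix N a b \<in> QmuN N"
  using QmuN_subfield
  by (cases a; cases b) (simp_all add: FX_matrix_simps fourier_coeff_in_QmuN is_subfield_def)

lemma FX_inv_matrix_in_QmuN: "b \<in> alphX N \<Longrightarrow> FX_inv_matrix N b a \<in> QmuN N"
  using QmuN_subfield
  by (cases a; cases b) (auto simp: FX_inv_matrix_def alphX_def inv_fourier_coeff_in_QmuN is_subfield_def)

theorem FX_hopf_iso:
  assumes N: "N > 0"
  shows "alg_iso (QmuN N) (alphXt N) (alphX N) (FX N)"
    and "S \<in> ser (QmuN N) (alphXt N) \<Longrightarrow> Dsh N (FX N S) = tmap (alphXt N) (F_letter N) (Dsht N S)"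
proof -
  interpret inverse_letter_substs "alphXt N" "alphX N" "FX_matrix N" "FX_inv_matrix N"
    by (rule inverse_letter_substs_FX[OF N])
  show "alg_iso (QmuN N) (alphXt N) (alphX N) (FX N)"
    unfolding FX_eq
    using alg_iso_subst_ser[OF QmuN_subfield] FX_matrix_in_QmuN[OF N] FX_inv_matrix_in_QmuN by blast
  interpret compatible_coproducts "alphXt N" "alphX N" "FX_matrix N" prim "\<lambda>_. 1" prim "\<lambda>_. 1"
    by (intro compatible_coproducts.intro compatible_coproducts_axioms.intro letter_subst_FX[OF N]
        graded_coproduct_prim finite_alphXt finite_alphX[OF N] L.subst_tser_prim)
  show "Dsh N (FX N S) = tmap (alphXt N) (F_letter N) (Dsht N S)"
    unfolding Dsh_def Dsht_def FX_eq tmap_F_letter_eq by (rule tens_ext_subst_ser)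
qed

section \<open>The map F_Y\<close>

definition FY_matrix :: "nat \<Rightarrow> ytl \<Rightarrow> yl \<Rightarrow> complex" where
  "FY_matrix N a b = FY_letter N a [b]"

fun FY_inv_matrix :: "nat \<Rightarrow> yl \<Rightarrow> ytl \<Rightarrow> complex" where
  "FY_inv_matrix N (YL k z) (YTL k' \<alpha>) = (if k' = k \<and> \<alpha> < N then inv_fourier_coeff N z \<alpha> else 0)"

lemma FY_matrix_simp:
  assumes "N > 0"
  shows "FY_matrix N (YTL k \<alpha>) (YL k' z) = (if k' = k then fourier_coeff N \<alpha> z else 0)"
proof (cases "k' = k")
  case True
  then have "FY_matrix N (YTL k \<alpha>) (YL k' z) =
        (\<Sum>m=1..N. zeta N powi (- int (m * iota_inv N \<alpha>)) * (if z = zeta N ^ m then 1 else 0))"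
    by (simp add: FY_matrix_def FY_letter_def sletter_def)
  then show ?thesis using True by (simp only: sum_zeta_powers_indicator[OF assms] fourier_coeff_def) simp
qed (simp add: FY_matrix_def FY_letter_def sletter_def)

lemma FY_letter_length: "FY_letter N a w \<noteq> 0 \<Longrightarrow> length w = 1"
proof (cases a)
  case (YTL k \<alpha>)
  assume "FY_letter N a w \<noteq> 0"
  then have "(\<Sum>m=1..N. zeta N powi (- int (m * iota_inv N \<alpha>)) * sletter (YL k (zeta N ^ m)) w) \<noteq> 0"
    using YTL by (simp add: FY_letter_def)
  then obtain m where "zeta N powi (- int (m * iota_inv N \<alpha>)) * sletter (YL k (zeta N ^ m)) w \<noteq> 0"
    by (meson sum.not_neutral_contains_not_neutral)
  then show ?thesis by (auto simp: sletter_def split: if_splits)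
qed

lemma FY_eq: "FY N = subst_ser (alphYt N) (FY_matrix N)"
  unfolding FY_def FY_matrix_def by (rule ext_eq_subst_ser) (rule FY_letter_length)

lemma tmap_FY_letter_eq: "tmap (alphYt N) (FY_letter N) = subst_tser (alphYt N) (FY_matrix N)"
  unfolding FY_matrix_def by (rule tmap_eq_subst_tser) (rule FY_letter_length)

lemma YTL_in_alphYt [simp]: "YTL k \<alpha> \<in> alphYt N \<longleftrightarrow> 1 \<le> k \<and> \<alpha> < N"
  by (auto simp: alphYt_def)

lemma YL_in_alphY [simp]: "YL k z \<in> alphY N \<longleftrightarrow> 1 \<le> k \<and> z \<in> mu N"
  by (auto simp: alphY_def)

lemma FY_img_letters_subset:
  assumes "N > 0"
  shows "{b. FY_matrix N (YTL k \<alpha>) b \<noteq> 0} \<subseteq> YL k ` mu N"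
proof
  fix b assume "b \<in> {b. FY_matrix N (YTL k \<alpha>) b \<noteq> 0}"
  moreover obtain k' z where "b = YL k' z" by (cases b)
  ultimately show "b \<in> YL k ` mu N"
    by (auto simp: FY_matrix_simp[OF assms] fourier_coeff_def split: if_splits)
qed

lemma FY_inv_img_letters_subset: "{a. FY_inv_matrix N (YL k z) a \<noteq> 0} \<subseteq> YTL k ` {..<N}"
proof
  fix a assume "a \<in> {a. FY_inv_matrix N (YL k z) a \<noteq> 0}"
  moreover obtain k' \<alpha> where "a = YTL k' \<alpha>" by (cases a)
  ultimately show "a \<in> YTL k ` {..<N}" by (auto split: if_splits)
qed

lemma letter_subst_FY: assumes N: "N > 0" shows "letter_subst (alphYt N) (alphY N) (FY_matrix N)"
proof
  fix a b assume "a \<in> alphYt N" "FY_matrix N a b \<noteq> 0"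
  moreover obtain k \<alpha> k' z where "a = YTL k \<alpha>" "b = YL k' z" by (cases a, cases b)
  ultimately show "b \<in> alphY N"
    by (auto simp: FY_matrix_simp[OF N] fourier_coeff_def split: if_splits)
next
  fix b
  obtain k z where b: "b = YL k z" by (cases b)
  have "{a. a \<in> alphYt N \<and> FY_matrix N a b \<noteq> 0} \<subseteq> YTL k ` {..<N}"
  proof
    fix a assume "a \<in> {a. a \<in> alphYt N \<and> FY_matrix N a b \<noteq> 0}"
    moreover obtain k' \<alpha> where "a = YTL k' \<alpha>" by (cases a)
    ultimately show "a \<in> YTL k ` {..<N}" using b by (auto simp: FY_matrix_simp[OF N] split: if_splits)
  qed
  then show "finite {a. a \<in> alphYt N \<and> FY_matrix N a b \<noteq> 0}" by (rule finite_subset) simp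
next
  fix a
  obtain k \<alpha> where "a = YTL k \<alpha>" by (cases a)
  then show "finite {b. FY_matrix N a b \<noteq> 0}"
    using finite_subset[OF FY_img_letters_subset[OF N]] finite_mu[OF N] by simp
qed

lemma letter_subst_FY_inv: assumes N: "N > 0" shows "letter_subst (alphY N) (alphYt N) (FY_inv_matrix N)"
proof
  fix b a assume "b \<in> alphY N" "FY_inv_matrix N b a \<noteq> 0"
  moreover obtain k z k' \<alpha> where "b = YL k z" "a = YTL k' \<alpha>" by (cases b, cases a)
  ultimately show "a \<in> alphYt N" by (auto split: if_splits)
next
  fix a
  obtain k \<alpha> where a: "a = YTL k \<alpha>" by (cases a)
  have "{b. b \<in> alphY N \<and> FY_inv_matrix N b a \<noteq> 0} \<subseteq> YL k ` mu N"
  proof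
    fix b assume "b \<in> {b. b \<in> alphY N \<and> FY_inv_matrix N b a \<noteq> 0}"
    moreover obtain k' z where "b = YL k' z" by (cases b)
    ultimately show "b \<in> YL k ` mu N" using a by (auto split: if_splits)
  qed
  then show "finite {b. b \<in> alphY N \<and> FY_inv_matrix N b a \<noteq> 0}"
    by (rule finite_subset) (simp add: finite_mu[OF N])
next
  fix b
  obtain k z where "b = YL k z" by (cases b)
  then show "finite {a. FY_inv_matrix N b a \<noteq> 0}"
    using finite_subset[OF FY_inv_img_letters_subset] by simp
qed

lemma inverse_letter_substs_FY:
  assumes N: "N > 0"
  shows "inverse_letter_substs (alphYt N) (alphY N) (FY_matrix N) (FY_inv_matrix N)"
proof -
  interpret L: letter_subst "alphYt N" "alphY N" "FY_matrix N" by (rule letter_subst_FY[OF N])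
  interpret L': letter_subst "alphY N" "alphYt N" "FY_inv_matrix N" by (rule letter_subst_FY_inv[OF N])
  show ?thesis
  proof
    fix a c assume a: "a \<in> alphYt N" and c: "c \<in> alphYt N"
    obtain k \<alpha> k' \<beta> where ac: "a = YTL k \<alpha>" "c = YTL k' \<beta>" by (cases a, cases c)
    have "(\<Sum>b\<in>{b. b \<in> alphY N \<and> FY_matrix N a b \<noteq> 0}. FY_matrix N a b * FY_inv_matrix N b c) =
          (\<Sum>z\<in>mu N. FY_matrix N a (YL k z) * FY_inv_matrix N (YL k z) c)"
      using FY_img_letters_subset[OF N, of k \<alpha>] finite_mu[OF N] ac
      by (subst L.sum_img_letters_superset[OF a, of "YL k ` mu N"]) (auto simp: sum.reindex inj_on_def)
    also have "\<dots> = (if a = c then 1 else 0)"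
      using a c ac fourier_orthogonal_left[OF N] by (cases "k' = k") (auto simp: FY_matrix_simp[OF N])
    finally show "(\<Sum>b\<in>{b. b \<in> alphY N \<and> FY_matrix N a b \<noteq> 0}. FY_matrix N a b * FY_inv_matrix N b c) =
          (if a = c then 1 else 0)" .
  next
    fix b d assume b: "b \<in> alphY N" and d: "d \<in> alphY N"
    obtain k z k' w where bd: "b = YL k z" "d = YL k' w" by (cases b, cases d)
    have "(\<Sum>a\<in>{a. a \<in> alphYt N \<and> FY_inv_matrix N b a \<noteq> 0}. FY_inv_matrix N b a * FY_matrix N a d) =
          (\<Sum>\<alpha><N. FY_inv_matrix N b (YTL k \<alpha>) * FY_matrix N (YTL k \<alpha>) d)"
      using FY_inv_img_letters_subset[of N k z] bd
      by (subst L'.sum_img_letters_superset[OF b, of "YTL k ` {..<N}"]) (auto simp: sum.reindex inj_on_def)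
    also have "\<dots> = (if b = d then 1 else 0)"
      using b d bd fourier_orthogonal_right[OF N] by (cases "k' = k") (auto simp: FY_matrix_simp[OF N])
    finally show "(\<Sum>a\<in>{a. a \<in> alphYt N \<and> FY_inv_matrix N b a \<noteq> 0}. FY_inv_matrix N b a * FY_matrix N a d) =
          (if b = d then 1 else 0)" .
  qed
qed

lemma FY_matrix_in_QmuN: "N > 0 \<Longrightarrow> FY_matrix N a b \<in> QmuN N"
  using QmuN_subfield
  by (cases a; cases b) (simp add: FY_matrix_simp fourier_coeff_in_QmuN is_subfield_def)

lemma FY_inv_matrix_in_QmuN: "b \<in> alphY N \<Longrightarrow> FY_inv_matrix N b a \<in> QmuN N"
  using QmuN_subfield
  by (cases a; cases b) (auto simp: inv_fourier_coeff_in_QmuN is_subfield_def)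

fun yt_weight :: "ytl \<Rightarrow> nat" where
  "yt_weight (YTL k \<alpha>) = k"

fun y_weight :: "yl \<Rightarrow> nat" where
  "y_weight (YL k z) = k"

definition stuffle_quadruples :: "nat \<Rightarrow> nat \<Rightarrow> complex \<Rightarrow> (nat \<times> complex \<times> nat \<times> complex) set" where
  "stuffle_quadruples N k z =
     {(k1, z1, k2, z2). 1 \<le> k1 \<and> 1 \<le> k2 \<and> k1 + k2 = k \<and> z1 \<in> mu N \<and> z2 \<in> mu N \<and> z1 * z2 = z}"

fun stuffle_term :: "nat \<Rightarrow> yl \<Rightarrow> yl tser" where
  "stuffle_term N (YL k z) =
     (\<lambda>t. \<Sum>(k1, z1, k2, z2)\<in>stuffle_quadruples N k z. etens [YL k1 z1] [YL k2 z2] t)"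

lemma Dst_letter_eq: "Dst_letter N b t = prim b t + stuffle_term N b t"
  by (cases b) (simp add: Dst_letter_def stuffle_quadruples_def case_prod_unfold)

lemma finite_stuffle_quadruples: "N > 0 \<Longrightarrow> finite (stuffle_quadruples N k z)"
  by (rule finite_subset[of _ "{..k} \<times> mu N \<times> {..k} \<times> mu N"])
    (auto simp: stuffle_quadruples_def finite_mu)

lemma stuffle_term_singletons:
  assumes "N > 0"
  shows "stuffle_term N (YL k z) ([YL k1 z1], [YL k2 z2]) =
         (if (k1, z1, k2, z2) \<in> stuffle_quadruples N k z then 1 else 0)"
proof -
  have "stuffle_term N (YL k z) ([YL k1 z1], [YL k2 z2]) =
        (\<Sum>q\<in>stuffle_quadruples N k z. if q = (k1, z1, k2, z2) then 1 else 0)"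
    by (auto simp: etens_def intro!: sum.cong)
  then show ?thesis by (simp add: sum.delta[OF finite_stuffle_quadruples[OF assms]])
qed

lemma stuffle_term_eq_0:
  "\<not> (\<exists>k1 z1 k2 z2. u = [YL k1 z1] \<and> w = [YL k2 z2]) \<Longrightarrow> stuffle_term N b (u, w) = 0"
  by (cases b) (auto simp: etens_def intro!: sum.neutral)

lemma stuffle_term_weight:
  "stuffle_term N b (u, w) \<noteq> 0 \<Longrightarrow> weight y_weight u + weight y_weight w = y_weight b"
proof (cases b)
  case (YL k z)
  assume "stuffle_term N b (u, w) \<noteq> 0"
  then have "(\<Sum>(k1, z1, k2, z2)\<in>stuffle_quadruples N k z. etens [YL k1 z1] [YL k2 z2] (u, w)) \<noteq> 0"
    using YL by simp
  then obtain q where "q \<in> stuffle_quadruples N k z"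
    "(case q of (k1, z1, k2, z2) \<Rightarrow> etens [YL k1 z1] [YL k2 z2] (u, w)) \<noteq> 0"
    by (meson sum.not_neutral_contains_not_neutral)
  then show ?thesis
    using YL by (auto simp: stuffle_quadruples_def etens_def split: if_splits)
qed

lemma graded_coproduct_Dstt: "graded_coproduct (alphYt N) Dstt_letter yt_weight"
proof
  fix a assume "a \<in> alphYt N"
  then show "1 \<le> yt_weight a" by (auto simp: alphYt_def)
next
  fix n
  have "{a. a \<in> alphYt N \<and> yt_weight a \<le> n} \<subseteq> (\<lambda>(k, \<alpha>). YTL k \<alpha>) ` ({..n} \<times> {..<N})"
    by (auto simp: alphYt_def)
  then show "finite {a. a \<in> alphYt N \<and> yt_weight a \<le> n}" by (rule finite_subset) simp
next
  fix a u w assume "a \<in> alphYt N" and nz: "Dstt_letter a (u, w) \<noteq> 0"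
  obtain k \<alpha> where a: "a = YTL k \<alpha>" by (cases a)
  from nz consider "prim a (u, w) \<noteq> 0" | "(\<Sum>k1\<in>{1..<k}. etens [YTL k1 \<alpha>] [YTL (k - k1) \<alpha>] (u, w)) \<noteq> 0"
    by (fastforce simp: a Dstt_letter_def)
  then show "weight yt_weight u + weight yt_weight w = yt_weight a"
  proof cases
    case 2
    then obtain k1 where "k1 \<in> {1..<k}" "etens [YTL k1 \<alpha>] [YTL (k - k1) \<alpha>] (u, w) \<noteq> 0"
      by (meson sum.not_neutral_contains_not_neutral)
    then show ?thesis using a by (auto simp: etens_def split: if_splits)
  qed (rule prim_weight)
qed

lemma graded_coproduct_Dst: assumes N: "N > 0" shows "graded_coproduct (alphY N) (Dst_letter N) y_weight"
proof
  fix a assume "a \<in> alphY N"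
  then show "1 \<le> y_weight a" by (auto simp: alphY_def)
next
  fix n
  have "{a. a \<in> alphY N \<and> y_weight a \<le> n} \<subseteq> (\<lambda>(k, z). YL k z) ` ({..n} \<times> mu N)"
    by (auto simp: alphY_def)
  then show "finite {a. a \<in> alphY N \<and> y_weight a \<le> n}"
    by (rule finite_subset) (simp add: finite_mu[OF N])
next
  fix a u w assume "Dst_letter N a (u, w) \<noteq> 0"
  then consider "prim a (u, w) \<noteq> 0" | "stuffle_term N a (u, w) \<noteq> 0"
    by (fastforce simp: Dst_letter_eq)
  then show "weight y_weight u + weight y_weight w = y_weight a"
    by cases (auto intro: prim_weight stuffle_term_weight)
qed

(* The quasi-shuffle term of a letter is mapped to the quasi-shuffle term of its image because
  z \<mapsto> fourier_coeff N \<alpha> z is multiplicative on \<mu>\<^sub>N. *)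
lemma sum_fourier_stuffle_term:
  assumes N: "N > 0"
  shows "(\<Sum>z\<in>mu N. fourier_coeff N \<alpha> z * stuffle_term N (YL k z) (u, w)) =
         (\<Sum>k1\<in>{1..<k}. subst_coeff (FY_matrix N) [YTL k1 \<alpha>] u * subst_coeff (FY_matrix N) [YTL (k - k1) \<alpha>] w)"
proof (cases "\<exists>k1 z1 k2 z2. u = [YL k1 z1] \<and> w = [YL k2 z2]")
  case True
  then obtain k1 z1 k2 z2 where uw: "u = [YL k1 z1]" "w = [YL k2 z2]" by blast
  let ?f = "fourier_coeff N \<alpha>"
  define C where "C \<longleftrightarrow> 1 \<le> k1 \<and> 1 \<le> k2 \<and> k1 + k2 = k \<and> z1 \<in> mu N \<and> z2 \<in> mu N"
  have "(\<Sum>z\<in>mu N. ?f z * stuffle_term N (YL k z) (u, w)) =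
        (\<Sum>z\<in>mu N. if z = z1 * z2 then (if C then ?f (z1 * z2) else 0) else 0)"
    by (rule sum.cong)
      (auto simp: uw stuffle_term_singletons[OF N] stuffle_quadruples_def C_def simp del: stuffle_term.simps)
  also have "\<dots> = (if C then ?f z1 * ?f z2 else 0)"
    by (auto simp: sum.delta[OF finite_mu[OF N]] C_def mu_mult fourier_coeff_mult)
  also have "\<dots> = (\<Sum>k1'\<in>{1..<k}. if k1' = k1 then (if k2 = k - k1 then ?f z1 * ?f z2 else 0) else 0)"
    by (auto simp: C_def fourier_coeff_def)
  also have "\<dots> = (\<Sum>k1'\<in>{1..<k}. subst_coeff (FY_matrix N) [YTL k1' \<alpha>] u *
                                     subst_coeff (FY_matrix N) [YTL (k - k1') \<alpha>] w)"
    by (rule sum.cong) (auto simp: uw FY_matrix_simp[OF N])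
  finally show ?thesis .
next
  case False
  then have "\<not> (length u = 1 \<and> length w = 1)"
    by (metis One_nat_def length_0_conv length_Suc_conv y_weight.cases)
  then show ?thesis
    using stuffle_term_eq_0[OF False] by (auto simp: subst_coeff_singleton simp del: stuffle_term.simps)
qed

lemma FY_compatible_letters:
  assumes N: "N > 0" and a: "a \<in> alphYt N"
  shows "(\<lambda>p. \<Sum>b\<in>{b. b \<in> alphY N \<and> FY_matrix N a b \<noteq> 0}. FY_matrix N a b * Dst_letter N b p)
         = subst_tser (alphYt N) (FY_matrix N) (Dstt_letter a)"
proof (rule ext, clarify)
  fix u w
  interpret L: letter_subst "alphYt N" "alphY N" "FY_matrix N" by (rule letter_subst_FY[OF N])
  obtain k \<alpha> where ak: "a = YTL k \<alpha>" by (cases a)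
  let ?B = "{b. b \<in> alphY N \<and> FY_matrix N a b \<noteq> 0}"
  have "(\<Sum>b\<in>?B. FY_matrix N a b * stuffle_term N b (u, w)) =
        (\<Sum>z\<in>mu N. fourier_coeff N \<alpha> z * stuffle_term N (YL k z) (u, w))"
    using FY_img_letters_subset[OF N, of k \<alpha>] finite_mu[OF N] ak
    by (subst L.sum_img_letters_superset[OF a, of "YL k ` mu N"])
      (auto simp: sum.reindex inj_on_def FY_matrix_simp[OF N])
  also have "\<dots> = (\<Sum>k1\<in>{1..<k}. L.\<Phi>\<^sub>2 (etens [YTL k1 \<alpha>] [YTL (k - k1) \<alpha>]) (u, w))"
    unfolding sum_fourier_stuffle_term[OF N]
    using a ak by (intro sum.cong) (auto simp: L.subst_tser_etens)
  finally have "(\<Sum>b\<in>?B. FY_matrix N a b * Dst_letter N b (u, w)) =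
      L.\<Phi>\<^sub>2 (prim a) (u, w) + (\<Sum>k1\<in>{1..<k}. L.\<Phi>\<^sub>2 (etens [YTL k1 \<alpha>] [YTL (k - k1) \<alpha>]) (u, w))"
    using fun_cong[OF L.subst_tser_prim[OF a], of "(u, w)"]
    by (simp add: Dst_letter_eq distrib_left sum.distrib)
  also have "\<dots> = L.\<Phi>\<^sub>2 (Dstt_letter a) (u, w)"
    by (simp add: ak Dstt_letter_def L.subst_tser_add L.subst_tser_sum)
  finally show "(\<Sum>b\<in>?B. FY_matrix N a b * Dst_letter N b (u, w)) = L.\<Phi>\<^sub>2 (Dstt_letter a) (u, w)" .
qed

theorem FY_hopf_iso:
  assumes N: "N > 0"
  shows "alg_iso (QmuN N) (alphYt N) (alphY N) (FY N)"
    and "S \<in> ser (QmuN N) (alphYt N) \<Longrightarrow> Dst N (FY N S) = tmap (alphYt N) (FY_letter N) (Dstt N S)"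
proof -
  interpret inverse_letter_substs "alphYt N" "alphY N" "FY_matrix N" "FY_inv_matrix N"
    by (rule inverse_letter_substs_FY[OF N])
  show "alg_iso (QmuN N) (alphYt N) (alphY N) (FY N)"
    unfolding FY_eq
    using alg_iso_subst_ser[OF QmuN_subfield] FY_matrix_in_QmuN[OF N] FY_inv_matrix_in_QmuN by blast
  interpret compatible_coproducts "alphYt N" "alphY N" "FY_matrix N" Dstt_letter yt_weight
      "Dst_letter N" y_weight
    by (intro compatible_coproducts.intro compatible_coproducts_axioms.intro letter_subst_FY[OF N]
        graded_coproduct_Dstt graded_coproduct_Dst[OF N] FY_compatible_letters[OF N])
  show "Dst N (FY N S) = tmap (alphYt N) (FY_letter N) (Dstt N S)"
    unfolding Dst_def Dstt_def FY_eq tmap_FY_letter_eq by (rule tens_ext_subst_ser)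
qed

theorem lemma3p4:
  fixes N :: nat
  assumes "3 \<le> N"
  shows "(alg_iso (QmuN N) (alphXt N) (alphX N) (FX N) \<and>
          (\<forall>S\<in>ser (QmuN N) (alphXt N).
             Dsh N (FX N S) = tmap (alphXt N) (F_letter N) (Dsht N S)))
       \<and> (alg_iso (QmuN N) (alphYt N) (alphY N) (FY N) \<and>
          (\<forall>S\<in>ser (QmuN N) (alphYt N).
             Dst N (FY N S) = tmap (alphYt N) (FY_letter N) (Dstt N S)))"
proof -
  have N: "N > 0" using assms by simp
  show ?thesis using FX_hopf_iso[OF N] FY_hopf_iso[OF N] by blast
qed

end
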